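(* Let $t_1,\dots,t_d$ be positive integers with $t_i\le n_i$ for all $i$ and $t_1=t_2\cdots t_d$, let $H$ be the stabilizer of $T=\sum_{\beta_2,\dots,\beta_d} e_1^{\iota(\beta_2,\dots,\beta_d)}\otimes e_2^{\beta_2}\otimes\cdots\otimes e_d^{\beta_d}$, so $\Lambda_{t_1\dots t_d}=G/H$. Then $G/H$ is reductive if and only if $n_i=t_i$ for all $i=1,\dots,d$. Moreover, in that case the orthogonal complement $\mathfrak{m}$ of $\mathfrak{h}$ in $\mathfrak{g}$ (with respect to $\langle Z,Z'\rangle=\sum_i\mathrm{tr}(Z_iZ_i'^{\mathsf T})$) satisfies $h\mathfrak{m}h^{-1}\subset\mathfrak{m}$ for all $h\in H$.
   Context: Fix integers $d\ge 3$ and $n_1,\dots,n_d\ge 2$. $V=\mathbb{R}^{n_1}\otimes\cdots\otimes\mathbb{R}^{n_d}$, and $G=\mathrm{GL}(n_1)\times\cdots\times\mathrm{GL}(n_d)$ acts on $V$ by $(g_1,\dots,g_d)\cdot(v_1\otimes\cdots\otimes v_d)=(g_1v_1)\otimes\cdots\otimes(g_dv_d)$, extended linearly. $e_i^1,\dots,e_i^{n_i}$ is the standard basis of $\mathbb{R}^{n_i}$. $\iota:[t_2]\times\cdots\times[t_d]\to[t_1]$ is the lexicographic bijection with $\beta_2$ most significant. $\mathfrak{g}=\mathfrak{gl}(n_1)\times\cdots\times\mathfrak{gl}(n_d)$ is the Lie algebra of $G$, $\mathfrak{h}$ the Lie algebra of $H$, and $H$ acts on $\mathfrak{g}$ by $hZh^{-1}=(h_iZ_ih_i^{-1})_i$.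 A homogeneous space $G/H$ is called reductive if there exists a linear subspace $\mathfrak{p}\subset\mathfrak{g}$ with $\mathfrak{p}\oplus\mathfrak{h}=\mathfrak{g}$ and $h\mathfrak{p}h^{-1}\subset\mathfrak{p}$ for all $h\in H$. *)

theory Defs
  imports Complex_Main "HOL-Library.FuncSet"
begin

text \<open>Tensor factors are indexed by 1..d. Square matrices of size m are
functions nat => nat => real that vanish outside the index range {0..<m}
(0-based, so the basis vector e_i^k of the paper is index k-1 here).
An element of G, g, or of any subset of them is a tuple Z :: nat => (nat => nat => real)
with Z i an n_i x n_i matrix for i in 1..d and Z i = 0 for i outside 1..d.\<close>

definition mats :: "nat \<Rightarrow> (nat \<Rightarrow> nat \<Rightarrow> real) set" where
  "mats m = {A. \<forall>a b. (m \<le> a \<or> m \<le> b) \<longrightarrow> A a b = 0}"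

definition mmul :: "nat \<Rightarrow> (nat \<Rightarrow> nat \<Rightarrow> real) \<Rightarrow> (nat \<Rightarrow> nat \<Rightarrow> real) \<Rightarrow> (nat \<Rightarrow> nat \<Rightarrow> real)" where
  "mmul m A B = (\<lambda>a b. if a < m \<and> b < m then (\<Sum>c<m. A a c * B c b) else 0)"

definition mid :: "nat \<Rightarrow> (nat \<Rightarrow> nat \<Rightarrow> real)" where
  "mid m = (\<lambda>a b. if a < m \<and> b < m \<and> a = b then 1 else 0)"

definition minvertible :: "nat \<Rightarrow> (nat \<Rightarrow> nat \<Rightarrow> real) \<Rightarrow> bool" where
  "minvertible m A \<longleftrightarrow> (\<exists>B\<in>mats m. mmul m A B = mid m \<and> mmul m B A = mid m)"

definition minv :: "nat \<Rightarrow> (nat \<Rightarrow> nat \<Rightarrow> real) \<Rightarrow> (nat \<Rightarrow> nat \<Rightarrow> real)" where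
  "minv m A = (THE B. B \<in> mats m \<and> mmul m A B = mid m \<and> mmul m B A = mid m)"

fun mpow :: "nat \<Rightarrow> (nat \<Rightarrow> nat \<Rightarrow> real) \<Rightarrow> nat \<Rightarrow> (nat \<Rightarrow> nat \<Rightarrow> real)" where
  "mpow m A 0 = mid m"
| "mpow m A (Suc k) = mmul m (mpow m A k) A"

definition mexp :: "nat \<Rightarrow> (nat \<Rightarrow> nat \<Rightarrow> real) \<Rightarrow> (nat \<Rightarrow> nat \<Rightarrow> real)" where
  "mexp m A = (\<lambda>a b. if a < m \<and> b < m then (\<Sum>k. mpow m A k a b / fact k) else 0)"

definition gl_alg :: "nat \<Rightarrow> (nat \<Rightarrow> nat) \<Rightarrow> (nat \<Rightarrow> nat \<Rightarrow> nat \<Rightarrow> real) set" where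
  "gl_alg d n = {Z. \<forall>i. (i \<in> {1..d} \<longrightarrow> Z i \<in> mats (n i)) \<and> (i \<notin> {1..d} \<longrightarrow> Z i = (\<lambda>a b. 0))}"

definition GLprod :: "nat \<Rightarrow> (nat \<Rightarrow> nat) \<Rightarrow> (nat \<Rightarrow> nat \<Rightarrow> nat \<Rightarrow> real) set" where
  "GLprod d n = {g \<in> gl_alg d n. \<forall>i\<in>{1..d}. minvertible (n i) (g i)}"

definition tidx :: "nat \<Rightarrow> (nat \<Rightarrow> nat) \<Rightarrow> (nat \<Rightarrow> nat) set" where
  "tidx d n = PiE {1..d} (\<lambda>i. {..<n i})"

definition tact :: "nat \<Rightarrow> (nat \<Rightarrow> nat) \<Rightarrow> (nat \<Rightarrow> nat \<Rightarrow> nat \<Rightarrow> real)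
     \<Rightarrow> ((nat \<Rightarrow> nat) \<Rightarrow> real) \<Rightarrow> ((nat \<Rightarrow> nat) \<Rightarrow> real)" where
  "tact d n g T = (\<lambda>\<alpha>. \<Sum>\<beta>\<in>tidx d n. (\<Prod>i\<in>{1..d}. g i (\<alpha> i) (\<beta> i)) * T \<beta>)"

text \<open>Lexicographic bijection iota (0-based), beta_2 most significant.\<close>
definition iota :: "nat \<Rightarrow> (nat \<Rightarrow> nat) \<Rightarrow> (nat \<Rightarrow> nat) \<Rightarrow> nat" where
  "iota d t \<beta> = (\<Sum>i\<in>{2..d}. \<beta> i * (\<Prod>j\<in>{i<..d}. t j))"

text \<open>The tensor T = sum over beta of e_1^{iota(beta)} (x) e_2^{beta_2} (x) ... (x) e_d^{beta_d},
given by its coordinates.\<close>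
definition Tten :: "nat \<Rightarrow> (nat \<Rightarrow> nat) \<Rightarrow> ((nat \<Rightarrow> nat) \<Rightarrow> real)" where
  "Tten d t = (\<lambda>\<alpha>. if (\<forall>i\<in>{2..d}. \<alpha> i < t i) \<and> \<alpha> 1 = iota d t \<alpha> then 1 else 0)"

definition stabilizer :: "nat \<Rightarrow> (nat \<Rightarrow> nat) \<Rightarrow> ((nat \<Rightarrow> nat) \<Rightarrow> real) \<Rightarrow> (nat \<Rightarrow> nat \<Rightarrow> nat \<Rightarrow> real) set" where
  "stabilizer d n T = {g \<in> GLprod d n. \<forall>\<alpha>\<in>tidx d n. tact d n g T \<alpha> = T \<alpha>}"

definition texp :: "nat \<Rightarrow> (nat \<Rightarrow> nat) \<Rightarrow> (nat \<Rightarrow> nat \<Rightarrow> nat \<Rightarrow> real) \<Rightarrow> (nat \<Rightarrow> nat \<Rightarrow> nat \<Rightarrow> real)" where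
  "texp d n Z = (\<lambda>i. if i \<in> {1..d} then mexp (n i) (Z i) else (\<lambda>a b. 0))"

definition lie_alg :: "nat \<Rightarrow> (nat \<Rightarrow> nat) \<Rightarrow> (nat \<Rightarrow> nat \<Rightarrow> nat \<Rightarrow> real) set \<Rightarrow> (nat \<Rightarrow> nat \<Rightarrow> nat \<Rightarrow> real) set" where
  "lie_alg d n H = {Z \<in> gl_alg d n. \<forall>s::real. texp d n (\<lambda>i a b. s * Z i a b) \<in> H}"

definition tconj :: "nat \<Rightarrow> (nat \<Rightarrow> nat) \<Rightarrow> (nat \<Rightarrow> nat \<Rightarrow> nat \<Rightarrow> real) \<Rightarrow> (nat \<Rightarrow> nat \<Rightarrow> nat \<Rightarrow> real) \<Rightarrow> (nat \<Rightarrow> nat \<Rightarrow> nat \<Rightarrow> real)" where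
  "tconj d n h Z = (\<lambda>i. if i \<in> {1..d} then mmul (n i) (mmul (n i) (h i) (Z i)) (minv (n i) (h i)) else (\<lambda>a b. 0))"

definition lin_subspace :: "(nat \<Rightarrow> nat \<Rightarrow> nat \<Rightarrow> real) set \<Rightarrow> bool" where
  "lin_subspace P \<longleftrightarrow> (\<lambda>i a b. 0) \<in> P
     \<and> (\<forall>X\<in>P. \<forall>Y\<in>P. (\<lambda>i a b. X i a b + Y i a b) \<in> P)
     \<and> (\<forall>c::real. \<forall>X\<in>P. (\<lambda>i a b. c * X i a b) \<in> P)"

definition reductive :: "nat \<Rightarrow> (nat \<Rightarrow> nat) \<Rightarrow> (nat \<Rightarrow> nat \<Rightarrow> nat \<Rightarrow> real) set \<Rightarrow> bool" where
  "reductive d n H \<longleftrightarrow> (\<exists>P. P \<subseteq> gl_alg d n \<and> lin_subspace P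
      \<and> P \<inter> lie_alg d n H = {(\<lambda>i a b. 0)}
      \<and> (\<forall>Z\<in>gl_alg d n. \<exists>X\<in>P. \<exists>Y\<in>lie_alg d n H. Z = (\<lambda>i a b. X i a b + Y i a b))
      \<and> (\<forall>h\<in>H. \<forall>X\<in>P. tconj d n h X \<in> P))"

definition tinner :: "nat \<Rightarrow> (nat \<Rightarrow> nat) \<Rightarrow> (nat \<Rightarrow> nat \<Rightarrow> nat \<Rightarrow> real) \<Rightarrow> (nat \<Rightarrow> nat \<Rightarrow> nat \<Rightarrow> real) \<Rightarrow> real" where
  "tinner d n Z Z' = (\<Sum>i\<in>{1..d}. \<Sum>a<n i. \<Sum>b<n i. Z i a b * Z' i a b)"

definition orth_compl :: "nat \<Rightarrow> (nat \<Rightarrow> nat) \<Rightarrow> (nat \<Rightarrow> nat \<Rightarrow> nat \<Rightarrow> real) set \<Rightarrow> (nat \<Rightarrow> nat \<Rightarrow> nat \<Rightarrow> real) set" where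
  "orth_compl d n S = {Z \<in> gl_alg d n. \<forall>Y\<in>S. tinner d n Z Y = 0}"

end

theory Submission
  imports Defs
begin

text \<open>
  The Lie algebra \<open>\<fraktur>h\<close> of the stabilizer \<open>H\<close> of \<open>T\<close> consists of the \<open>Z\<close> that annihilate \<open>T\<close>
  under the infinitesimal action \<open>Z\<cdot>T = \<Sum>\<^sub>j (1 \<otimes> \<dots> \<otimes> Z\<^sub>j \<otimes> \<dots> \<otimes> 1) T\<close>.

  Indices are 0-based. If \<open>t\<^sub>i < n\<^sub>i\<close>, the shears \<open>1 \<pm> E\<^sub>0\<^sub>,\<^sub>t\<^sub>i\<close> in the \<open>i\<close>-th factor fix \<open>T\<close>, since no
  coordinate of \<open>T\<close> has \<open>i\<close>-th index \<open>t\<^sub>i\<close>. In an \<open>H\<close>-invariant complement, averaging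
  these conjugates of the component \<open>p\<close> of \<open>E\<^sub>t\<^sub>i\<^sub>,\<^sub>0\<close> leaves a multiple of
  \<open>E\<^sub>0\<^sub>,\<^sub>t\<^sub>i \<in> \<fraktur>h\<close>, so the \<open>(t\<^sub>i,0)\<close> entry of \<open>p\<close> vanishes; evaluating \<open>Y\<cdot>T\<close> at the index
  \<open>(0,\<dots>,t\<^sub>i,\<dots>,0)\<close> shows the same for the \<open>\<fraktur>h\<close>-component \<open>Y\<close>, a contradiction.

  If \<open>n = t\<close>, then \<open>(Z\<cdot>T)(\<alpha>)\<close> depends on \<open>Z\<^sub>1\<close> only through the entry \<open>(\<alpha>\<^sub>1, \<iota>(\<alpha>\<^sub>2,\<dots>,\<alpha>\<^sub>d))\<close>,
  and these pairs exhaust \<open>[t\<^sub>1]\<^sup>2\<close>; hence \<open>\<fraktur>g\<fraktur>l(n\<^sub>1) \<times> 0\<close> is a complement of \<open>\<fraktur>h\<close>, obviously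
  \<open>H\<close>-invariant. Moreover \<open>h \<in> H\<close> means \<open>h\<^sub>1 K\<^sup>T = 1\<close> for the Kronecker product
  \<open>K = h\<^sub>2 \<otimes> \<dots> \<otimes> h\<^sub>d\<close>, so \<open>K\<^sup>T h\<^sub>1 = 1\<close> as well and \<open>H\<close> is closed under transposition.
  Since \<open>\<langle>hZh\<^sup>-\<^sup>1, Y\<rangle> = \<langle>Z, h\<^sup>TY(h\<^sup>T)\<^sup>-\<^sup>1\<rangle>\<close> and \<open>\<fraktur>h\<close> is \<open>Ad(H)\<close>-invariant, so is \<open>\<fraktur>h\<^sup>\<bottom>\<close>.
\<close>

type_synonym real_mat = "nat \<Rightarrow> nat \<Rightarrow> real"
type_synonym mat_tuple = "nat \<Rightarrow> nat \<Rightarrow> nat \<Rightarrow> real"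
type_synonym tensor = "(nat \<Rightarrow> nat) \<Rightarrow> real"

section \<open>Square matrices\<close>

lemma mmul_mats [simp]: "mmul m A B \<in> mats m"
  by (simp add: mats_def mmul_def)

lemma mid_mats [simp]: "mid m \<in> mats m"
  by (simp add: mats_def mid_def)

lemma mats_outside: "A \<in> mats m \<Longrightarrow> \<not> (a < m \<and> b < m) \<Longrightarrow> A a b = 0"
  by (auto simp: mats_def)

lemma mmul_eq_sum: "A \<in> mats m \<Longrightarrow> b < m \<Longrightarrow> mmul m A B a b = (\<Sum>c<m. A a c * B c b)"
  by (cases "a < m") (simp_all add: mmul_def mats_outside)

lemma mmul_assoc: "mmul m (mmul m A B) C = mmul m A (mmul m B C)"
  unfolding mmul_def
  by (auto intro!: ext simp: sum_distrib_left sum_distrib_right mult.assoc intro: sum.swap)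

lemma mmul_mid_left: "A \<in> mats m \<Longrightarrow> mmul m (mid m) A = A"
  unfolding mmul_def mid_def mats_def
  by (auto intro!: ext simp: if_distrib[of "\<lambda>x. x * _"] sum.delta cong: if_cong)

lemma mmul_mid_right: "A \<in> mats m \<Longrightarrow> mmul m A (mid m) = A"
  unfolding mmul_def mid_def mats_def
  by (auto intro!: ext simp: if_distrib[of "\<lambda>x. _ * x"] sum.delta cong: if_cong)

lemma mmul_zero_left [simp]: "mmul m (\<lambda>a b. 0) B = (\<lambda>a b. 0)"
  by (auto simp: mmul_def intro!: ext)

lemma mmul_zero_right [simp]: "mmul m B (\<lambda>a b. 0) = (\<lambda>a b. 0)"
  by (auto simp: mmul_def intro!: ext)

lemma minv_eqI:
  assumes "B \<in> mats m" "mmul m A B = mid m" "mmul m B A = mid m"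
  shows "minv m A = B"
  unfolding minv_def
proof (rule the_equality)
  fix B' assume B': "B' \<in> mats m \<and> mmul m A B' = mid m \<and> mmul m B' A = mid m"
  have "B' = mmul m B' (mmul m A B)" using B' assms by (simp add: mmul_mid_right)
  also have "\<dots> = mmul m (mmul m B' A) B" by (simp add: mmul_assoc)
  also have "\<dots> = B" using B' assms by (simp add: mmul_mid_left)
  finally show "B' = B" .
qed (use assms in simp)

lemma minvertibleI: "B \<in> mats m \<Longrightarrow> mmul m A B = mid m \<Longrightarrow> mmul m B A = mid m \<Longrightarrow> minvertible m A"
  unfolding minvertible_def by blast

lemma minvertibleD:
  assumes "minvertible m A"
  shows "minv m A \<in> mats m" "mmul m A (minv m A) = mid m" "mmul m (minv m A) A = mid m"
proof -
  from assms obtain B where B: "B \<in> mats m" "mmul m A B = mid m" "mmul m B A = mid m"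
    unfolding minvertible_def by blast
  then show "minv m A \<in> mats m" "mmul m A (minv m A) = mid m" "mmul m (minv m A) A = mid m"
    using minv_eqI[OF B] by auto
qed

lemma minv_eq_right_inverse:
  assumes "minvertible m A" "B \<in> mats m" "mmul m A B = mid m"
  shows "minv m A = B"
proof -
  note inv = minvertibleD[OF assms(1)]
  have "minv m A = mmul m (minv m A) (mmul m A B)"
    using inv(1) assms(3) by (simp add: mmul_mid_right)
  also have "\<dots> = mmul m (mmul m (minv m A) A) B" by (simp add: mmul_assoc)
  also have "\<dots> = B" using inv(3) assms(2) by (simp add: mmul_mid_left)
  finally show ?thesis .
qed

lemma mid_minvertible: "minvertible m (mid m)" and minv_mid: "minv m (mid m) = mid m"
  by (auto intro: minvertibleI[of "mid m"] minv_eqI simp: mmul_mid_left)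

definition mtranspose :: "real_mat \<Rightarrow> real_mat" where
  "mtranspose A = (\<lambda>a b. A b a)"

lemma mtranspose_mats: "A \<in> mats m \<Longrightarrow> mtranspose A \<in> mats m"
  by (auto simp: mats_def mtranspose_def)

lemma mtranspose_mtranspose [simp]: "mtranspose (mtranspose A) = A"
  by (simp add: mtranspose_def)

lemma mtranspose_mmul: "mtranspose (mmul m A B) = mmul m (mtranspose B) (mtranspose A)"
  by (auto simp: mmul_def mtranspose_def mult.commute intro!: ext)

lemma mtranspose_mid [simp]: "mtranspose (mid m) = mid m"
  by (auto simp: mtranspose_def mid_def intro!: ext)

lemma minvertible_mtranspose:
  assumes "minvertible m A"
  shows "minvertible m (mtranspose A)" "minv m (mtranspose A) = mtranspose (minv m A)"
proof -
  note inv = minvertibleD[OF assms]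
  have "mmul m (mtranspose A) (mtranspose (minv m A)) = mid m"
    "mmul m (mtranspose (minv m A)) (mtranspose A) = mid m"
    using inv by (simp_all add: mtranspose_mmul[symmetric])
  then show "minvertible m (mtranspose A)" "minv m (mtranspose A) = mtranspose (minv m A)"
    using mtranspose_mats[OF inv(1)] by (auto intro: minvertibleI minv_eqI)
qed

definition mtrace :: "nat \<Rightarrow> real_mat \<Rightarrow> real" where
  "mtrace m A = (\<Sum>a<m. A a a)"

lemma mtrace_mmul_commute: "mtrace m (mmul m A B) = mtrace m (mmul m B A)"
  unfolding mtrace_def mmul_def by (simp add: mult.commute) (rule sum.swap)

definition minner :: "nat \<Rightarrow> real_mat \<Rightarrow> real_mat \<Rightarrow> real" where
  "minner m A B = (\<Sum>a<m. \<Sum>b<m. A a b * B a b)"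

lemma minner_eq_mtrace: "minner m A B = mtrace m (mmul m A (mtranspose B))"
  by (simp add: minner_def mtrace_def mmul_def mtranspose_def)

lemma minner_conj:
  "minner m (mmul m (mmul m H Z) K) Y = minner m Z (mmul m (mmul m (mtranspose H) Y) (mtranspose K))"
proof -
  have "minner m (mmul m (mmul m H Z) K) Y = mtrace m (mmul m H (mmul m Z (mmul m K (mtranspose Y))))"
    by (simp add: minner_eq_mtrace mmul_assoc)
  also have "\<dots> = mtrace m (mmul m (mmul m Z (mmul m K (mtranspose Y))) H)"
    by (rule mtrace_mmul_commute)
  also have "\<dots> = minner m Z (mmul m (mmul m (mtranspose H) Y) (mtranspose K))"
    by (simp add: minner_eq_mtrace mtranspose_mmul mmul_assoc)
  finally show ?thesis .
qed

section \<open>The matrix exponential\<close>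

lemma mpow_mats [simp]: "mpow m A k \<in> mats m"
  by (cases k) auto

lemma mpow_scale: "mpow m (\<lambda>a b. s * A a b) k = (\<lambda>a b. s ^ k * mpow m A k a b)"
  by (induction k) (auto intro!: ext simp: mmul_def mid_def sum_distrib_left mult_ac)

lemma mpow_Suc_left: "A \<in> mats m \<Longrightarrow> mpow m A (Suc k) = mmul m A (mpow m A k)"
  by (induction k) (simp_all add: mmul_mid_left mmul_mid_right mmul_assoc)

lemma mats_bounded: "A \<in> mats m \<Longrightarrow> \<exists>M\<ge>0. \<forall>a b. \<bar>A a b\<bar> \<le> M"
proof (intro exI[of _ "\<Sum>a<m. \<Sum>b<m. \<bar>A a b\<bar>"] conjI allI)
  fix a b assume A: "A \<in> mats m"
  show "\<bar>A a b\<bar> \<le> (\<Sum>a<m. \<Sum>b<m. \<bar>A a b\<bar>)"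
  proof (cases "a < m \<and> b < m")
    case True
    have "\<bar>A a b\<bar> \<le> (\<Sum>b<m. \<bar>A a b\<bar>)" by (rule member_le_sum) (use True in auto)
    also have "\<dots> \<le> (\<Sum>a<m. \<Sum>b<m. \<bar>A a b\<bar>)"
      by (rule member_le_sum[where f="\<lambda>a. \<Sum>b<m. \<bar>A a b\<bar>"]) (use True in \<open>auto intro: sum_nonneg\<close>)
    finally show ?thesis .
  qed (simp add: mats_outside[OF A] sum_nonneg)
qed (simp add: sum_nonneg)

lemma mpow_bound:
  assumes "\<And>a b. \<bar>A a b\<bar> \<le> M" "0 \<le> M"
  shows "\<bar>mpow m A k a b\<bar> \<le> (real m * M) ^ k"
proof (induction k arbitrary: a b)
  case 0 then show ?case by (simp add: mid_def)
next
  case (Suc k)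
  have "\<bar>\<Sum>c<m. mpow m A k a c * A c b\<bar> \<le> (\<Sum>c<m. (real m * M) ^ k * M)"
    by (rule order_trans[OF sum_abs sum_mono])
       (auto simp: abs_mult assms(2) intro!: mult_mono Suc assms)
  also have "\<dots> = (real m * M) ^ Suc k" by (simp add: mult_ac)
  finally show ?case using \<open>0 \<le> M\<close> by (auto simp: mmul_def)
qed

lemma mpow_summable:
  assumes "A \<in> mats m"
  shows "summable (\<lambda>k. mpow m A k a b / fact k * s ^ k)"
proof -
  obtain M where M: "0 \<le> M" "\<And>a b. \<bar>A a b\<bar> \<le> M" using mats_bounded[OF assms] by blast
  have "summable (\<lambda>k. inverse (fact k) * (real m * M * \<bar>s\<bar>) ^ k)"
    by (rule summable_exp)
  then show ?thesis
  proof (rule summable_comparison_test'[where N=0])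
    fix k :: nat
    have "\<bar>mpow m A k a b\<bar> * \<bar>s\<bar> ^ k \<le> (real m * M) ^ k * \<bar>s\<bar> ^ k"
      by (rule mult_right_mono[OF mpow_bound[OF M(2,1)]]) simp
    then show "norm (mpow m A k a b / fact k * s ^ k) \<le> inverse (fact k) * (real m * M * \<bar>s\<bar>) ^ k"
      by (simp add: abs_mult power_abs divide_simps power_mult_distrib mult_ac)
  qed
qed

definition mexp_scaled :: "nat \<Rightarrow> real_mat \<Rightarrow> real \<Rightarrow> real_mat" where
  "mexp_scaled m A s = mexp m (\<lambda>a b. s * A a b)"

lemma mexp_scaled_series:
  "a < m \<Longrightarrow> b < m \<Longrightarrow> mexp_scaled m A s a b = (\<Sum>k. mpow m A k a b / fact k * s ^ k)"
  by (simp add: mexp_scaled_def mexp_def mpow_scale mult_ac)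

lemma mexp_scaled_mats [simp]: "mexp_scaled m A s \<in> mats m"
  by (simp add: mexp_scaled_def mexp_def mats_def)

lemma mexp_scaled_zero: "mexp_scaled m A 0 = mid m"
proof (intro ext)
  fix a b show "mexp_scaled m A 0 a b = mid m a b"
  proof (cases "a < m \<and> b < m")
    case True
    then show ?thesis using powser_zero[of "\<lambda>k. mpow m A k a b / fact k"]
      by (simp add: mexp_scaled_series mid_def)
  qed (auto simp: mats_outside[OF mexp_scaled_mats] mid_def)
qed

lemma mmul_mexp_scaled_right:
  assumes "A \<in> mats m" "a < m" "b < m"
  shows "mmul m (mexp_scaled m A s) A a b = (\<Sum>k. mpow m A (Suc k) a b / fact k * s ^ k)"
proof -
  have "mmul m (mexp_scaled m A s) A a b = (\<Sum>c<m. (\<Sum>k. mpow m A k a c / fact k * s ^ k) * A c b)"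
    using assms by (simp add: mmul_def mexp_scaled_series)
  also have "\<dots> = (\<Sum>c<m. \<Sum>k. mpow m A k a c / fact k * s ^ k * A c b)"
    by (intro sum.cong refl suminf_mult2 mpow_summable assms)
  also have "\<dots> = (\<Sum>k. \<Sum>c<m. mpow m A k a c / fact k * s ^ k * A c b)"
    by (rule suminf_sum[symmetric]) (intro summable_mult2 mpow_summable assms)
  also have "\<dots> = (\<Sum>k. mpow m A (Suc k) a b / fact k * s ^ k)"
    using assms by (intro suminf_cong)
      (simp add: mmul_def sum_divide_distrib sum_distrib_left sum_distrib_right mult_ac)
  finally show ?thesis .
qed

lemma mmul_mexp_scaled_left:
  assumes "A \<in> mats m" "a < m" "b < m"
  shows "mmul m A (mexp_scaled m A s) a b = (\<Sum>k. mpow m A (Suc k) a b / fact k * s ^ k)"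
proof -
  have "mmul m A (mexp_scaled m A s) a b = (\<Sum>c<m. A a c * (\<Sum>k. mpow m A k c b / fact k * s ^ k))"
    using assms by (simp add: mmul_def mexp_scaled_series)
  also have "\<dots> = (\<Sum>c<m. \<Sum>k. A a c * (mpow m A k c b / fact k * s ^ k))"
    by (intro sum.cong refl suminf_mult[symmetric] mpow_summable assms)
  also have "\<dots> = (\<Sum>k. \<Sum>c<m. A a c * (mpow m A k c b / fact k * s ^ k))"
    by (rule suminf_sum[symmetric]) (intro summable_mult mpow_summable assms)
  also have "\<dots> = (\<Sum>k. mpow m A (Suc k) a b / fact k * s ^ k)"
    using assms by (intro suminf_cong)
      (simp del: mpow.simps add: mpow_Suc_left mmul_def sum_divide_distrib sum_distrib_left
        sum_distrib_right mult_ac)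
  finally show ?thesis .
qed

lemma mexp_scaled_commute:
  assumes "A \<in> mats m"
  shows "mmul m A (mexp_scaled m A s) = mmul m (mexp_scaled m A s) A"
proof (intro ext)
  fix a b
  show "mmul m A (mexp_scaled m A s) a b = mmul m (mexp_scaled m A s) A a b"
    by (cases "a < m \<and> b < m")
       (simp_all add: assms mmul_mexp_scaled_left mmul_mexp_scaled_right mats_outside[OF mmul_mats])
qed

lemma mexp_scaled_has_derivative:
  assumes "A \<in> mats m"
  shows "((\<lambda>s. mexp_scaled m A s a b) has_real_derivative mmul m (mexp_scaled m A s) A a b) (at s)"
proof (cases "a < m \<and> b < m")
  case True
  let ?c = "\<lambda>k. mpow m A k a b / fact k"
  have "((\<lambda>s. \<Sum>k. ?c k * s ^ k) has_real_derivative (\<Sum>k. diffs ?c k * s ^ k)) (at s)"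
    by (rule termdiffs_strong_converges_everywhere) (rule mpow_summable[OF assms])
  moreover have "(\<Sum>k. diffs ?c k * s ^ k) = mmul m (mexp_scaled m A s) A a b"
    using True by (simp add: mmul_mexp_scaled_right[OF assms] diffs_def divide_simps del: of_nat_Suc)
  ultimately show ?thesis
    using True by (simp add: mexp_scaled_series)
qed (simp add: mats_outside[OF mexp_scaled_mats] mats_outside[OF mmul_mats])

text \<open>The product \<open>exp(sA) exp(-sA)\<close> has derivative zero, hence is constant.\<close>

lemma mexp_scaled_inverse:
  assumes A: "A \<in> mats m"
  shows "mmul m (mexp_scaled m A s) (mexp_scaled m A (-s)) = mid m"
proof (intro ext)
  fix a b
  let ?E = "mexp_scaled m A"
  let ?G = "\<lambda>s. mmul m (?E s) (?E (-s)) a b"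
  have "(?G has_real_derivative 0) (at x)" for x
  proof (cases "a < m \<and> b < m")
    case True
    have E': "((\<lambda>s. ?E (-s) c b) has_real_derivative - mmul m (?E (-x)) A c b) (at x)" for c
      using DERIV_mirror[THEN iffD1, OF mexp_scaled_has_derivative[OF A, of c b "-x"]] by simp
    let ?G' = "\<Sum>c<m. mmul m (?E x) A a c * ?E (-x) c b + - mmul m (?E (-x)) A c b * ?E x a c"
    have "((\<lambda>s. \<Sum>c<m. ?E s a c * ?E (-s) c b) has_real_derivative ?G') (at x)"
      by (intro DERIV_sum DERIV_mult mexp_scaled_has_derivative E' A)
    moreover have "?G = (\<lambda>s. \<Sum>c<m. ?E s a c * ?E (-s) c b)"
      using True by (simp add: mmul_def)
    moreover have "?G' = mmul m (mmul m (?E x) A) (?E (-x)) a b - mmul m (?E x) (mmul m (?E (-x)) A) a b"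
      using True by (simp add: mmul_def sum_subtractf[symmetric] algebra_simps)
    moreover have "mmul m (mmul m (?E x) A) (?E (-x)) = mmul m (?E x) (mmul m (?E (-x)) A)"
      by (simp add: mmul_assoc mexp_scaled_commute[OF A])
    ultimately show ?thesis by simp
  qed (auto simp: mmul_def)
  then have "?G s = ?G 0" by (intro DERIV_isconst_all) blast
  then show "?G s = mid m a b" by (simp add: mexp_scaled_zero mmul_mid_left)
qed

lemma mexp_scaled_minvertible:
  assumes "A \<in> mats m"
  shows "minvertible m (mexp_scaled m A s)"
  using mexp_scaled_inverse[OF assms, of s] mexp_scaled_inverse[OF assms, of "-s"]
  by (intro minvertibleI[of "mexp_scaled m A (-s)"]) simp_all


section \<open>The group \<open>G\<close>, its Lie algebra and the action on tensors\<close>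

definition gmul :: "nat \<Rightarrow> (nat \<Rightarrow> nat) \<Rightarrow> mat_tuple \<Rightarrow> mat_tuple \<Rightarrow> mat_tuple" where
  "gmul d n g g' = (\<lambda>i. if i \<in> {1..d} then mmul (n i) (g i) (g' i) else (\<lambda>a b. 0))"

definition gid :: "nat \<Rightarrow> (nat \<Rightarrow> nat) \<Rightarrow> mat_tuple" where
  "gid d n = (\<lambda>i. if i \<in> {1..d} then mid (n i) else (\<lambda>a b. 0))"

definition ginverse :: "nat \<Rightarrow> (nat \<Rightarrow> nat) \<Rightarrow> mat_tuple \<Rightarrow> mat_tuple" where
  "ginverse d n g = (\<lambda>i. if i \<in> {1..d} then minv (n i) (g i) else (\<lambda>a b. 0))"

definition gslot :: "nat \<Rightarrow> (nat \<Rightarrow> nat) \<Rightarrow> nat \<Rightarrow> real_mat \<Rightarrow> mat_tuple" where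
  "gslot d n j A = (\<lambda>i. if i \<in> {1..d} then (if i = j then A else mid (n i)) else (\<lambda>a b. 0))"

definition gexp :: "nat \<Rightarrow> (nat \<Rightarrow> nat) \<Rightarrow> mat_tuple \<Rightarrow> real \<Rightarrow> mat_tuple" where
  "gexp d n Z s = (\<lambda>i. if i \<in> {1..d} then mexp_scaled (n i) (Z i) s else (\<lambda>a b. 0))"

lemma texp_scaled: "texp d n (\<lambda>i a b. s * Z i a b) = gexp d n Z s"
  unfolding texp_def gexp_def mexp_scaled_def by (rule refl)

lemma gl_alg_mats: "Z \<in> gl_alg d n \<Longrightarrow> i \<in> {1..d} \<Longrightarrow> Z i \<in> mats (n i)"
  by (simp add: gl_alg_def)

lemma gl_alg_outside: "Z \<in> gl_alg d n \<Longrightarrow> i \<notin> {1..d} \<Longrightarrow> Z i = (\<lambda>a b. 0)"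
  by (simp add: gl_alg_def)

lemma GLprodD:
  assumes "g \<in> GLprod d n"
  shows "g \<in> gl_alg d n" "\<And>i. i \<in> {1..d} \<Longrightarrow> minvertible (n i) (g i)"
  using assms by (auto simp: GLprod_def)

lemma gslot_gl_alg: "A \<in> mats (n j) \<Longrightarrow> gslot d n j A \<in> gl_alg d n"
  by (simp add: gslot_def gl_alg_def)

lemma ginverse_GLprod:
  assumes "g \<in> GLprod d n"
  shows "ginverse d n g \<in> GLprod d n"
proof -
  have "minvertible (n i) (minv (n i) (g i))" if "i \<in> {1..d}" for i
    using minvertibleD[OF GLprodD(2)[OF assms that]] gl_alg_mats[OF GLprodD(1)[OF assms] that]
    by (intro minvertibleI[of "g i"])
  then show ?thesis
    using minvertibleD(1)[OF GLprodD(2)[OF assms]] by (simp add: GLprod_def gl_alg_def ginverse_def)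
qed

lemma gmul_ginverse_left: "g \<in> GLprod d n \<Longrightarrow> gmul d n (ginverse d n g) g = gid d n"
  using minvertibleD(3)[OF GLprodD(2)] by (auto simp: gmul_def ginverse_def gid_def)

lemma gexp_GLprod: "Z \<in> gl_alg d n \<Longrightarrow> gexp d n Z s \<in> GLprod d n"
  by (simp add: GLprod_def gl_alg_def gexp_def mexp_scaled_minvertible)

lemma gexp_zero: "gexp d n Z 0 = gid d n"
  unfolding gexp_def gid_def mexp_scaled_zero by (rule refl)

lemma finite_tidx [simp]: "finite (tidx d n)"
  by (simp add: tidx_def finite_PiE)

lemma tidx_less: "\<alpha> \<in> tidx d n \<Longrightarrow> i \<in> {1..d} \<Longrightarrow> \<alpha> i < n i"
  by (auto simp: tidx_def PiE_def Pi_def)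

lemma tidx_upd: "\<alpha> \<in> tidx d n \<Longrightarrow> j \<in> {1..d} \<Longrightarrow> c < n j \<Longrightarrow> \<alpha>(j := c) \<in> tidx d n"
  by (auto simp: tidx_def PiE_def Pi_def extensional_def)

lemma tidx_undefined: "\<alpha> \<in> tidx d n \<Longrightarrow> i \<notin> {1..d} \<Longrightarrow> \<alpha> i = undefined"
  by (auto simp: tidx_def PiE_def extensional_def)

lemma tidx_eqI: "\<alpha> \<in> tidx d n \<Longrightarrow> \<beta> \<in> tidx d n \<Longrightarrow> (\<And>i. i \<in> {1..d} \<Longrightarrow> \<alpha> i = \<beta> i) \<Longrightarrow> \<alpha> = \<beta>"
  unfolding tidx_def by (rule PiE_ext)

lemma tact_cong: "(\<And>\<beta>. \<beta> \<in> tidx d n \<Longrightarrow> v \<beta> = w \<beta>) \<Longrightarrow> tact d n g v = tact d n g w"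
  unfolding tact_def by (intro ext sum.cong refl) auto

lemma tact_sum: "tact d n g (\<lambda>\<beta>. \<Sum>j\<in>J. v j \<beta>) \<alpha> = (\<Sum>j\<in>J. tact d n g (v j) \<alpha>)"
  unfolding tact_def by (simp add: sum_distrib_left sum.swap[of _ J])

lemma tact_zero [simp]: "tact d n g (\<lambda>\<beta>. 0) = (\<lambda>\<alpha>. 0)"
  by (simp add: tact_def)

lemma tact_gmul:
  assumes g: "g \<in> gl_alg d n"
  shows "tact d n g (tact d n g' v) = tact d n (gmul d n g g') v"
proof
  fix \<alpha>
  have kernel: "(\<Sum>\<beta>\<in>tidx d n. \<Prod>i\<in>{1..d}. g i (\<alpha> i) (\<beta> i) * g' i (\<beta> i) (\<gamma> i))
      = (\<Prod>i\<in>{1..d}. gmul d n g g' i (\<alpha> i) (\<gamma> i))" if \<gamma>: "\<gamma> \<in> tidx d n" for \<gamma>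
  proof -
    have "(\<Sum>\<beta>\<in>tidx d n. \<Prod>i\<in>{1..d}. g i (\<alpha> i) (\<beta> i) * g' i (\<beta> i) (\<gamma> i))
        = (\<Prod>i\<in>{1..d}. \<Sum>b<n i. g i (\<alpha> i) b * g' i b (\<gamma> i))"
      unfolding tidx_def by (rule prod_sum_PiE[symmetric]) auto
    also have "\<dots> = (\<Prod>i\<in>{1..d}. gmul d n g g' i (\<alpha> i) (\<gamma> i))"
      using g \<gamma> by (intro prod.cong refl) (simp add: gmul_def mmul_eq_sum gl_alg_mats tidx_less)
    finally show ?thesis .
  qed
  have "tact d n g (tact d n g' v) \<alpha>
      = (\<Sum>\<beta>\<in>tidx d n. \<Sum>\<gamma>\<in>tidx d n. (\<Prod>i\<in>{1..d}. g i (\<alpha> i) (\<beta> i)) * ((\<Prod>i\<in>{1..d}. g' i (\<beta> i) (\<gamma> i)) * v \<gamma>))"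
    by (simp add: tact_def sum_distrib_left)
  also have "\<dots> = (\<Sum>\<gamma>\<in>tidx d n. (\<Sum>\<beta>\<in>tidx d n. \<Prod>i\<in>{1..d}. g i (\<alpha> i) (\<beta> i) * g' i (\<beta> i) (\<gamma> i)) * v \<gamma>)"
    by (subst sum.swap) (simp add: sum_distrib_right prod.distrib mult.assoc)
  also have "\<dots> = tact d n (gmul d n g g') v \<alpha>"
    unfolding tact_def by (intro sum.cong refl arg_cong2[where f="(*)"] kernel)
  finally show "tact d n g (tact d n g' v) \<alpha> = tact d n (gmul d n g g') v \<alpha>" .
qed

lemma tact_gid:
  assumes \<alpha>: "\<alpha> \<in> tidx d n"
  shows "tact d n (gid d n) v \<alpha> = v \<alpha>"
proof -
  have "(\<Prod>i\<in>{1..d}. gid d n i (\<alpha> i) (\<beta> i)) * v \<beta> = (if \<beta> = \<alpha> then v \<beta> else 0)"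
    if \<beta>: "\<beta> \<in> tidx d n" for \<beta>
  proof (cases "\<beta> = \<alpha>")
    case False
    then obtain i where "i \<in> {1..d}" "\<beta> i \<noteq> \<alpha> i" using tidx_eqI[OF \<beta> \<alpha>] by blast
    then show ?thesis by (auto simp: gid_def mid_def intro!: prod_zero)
  qed (simp add: gid_def mid_def tidx_less[OF \<alpha>])
  then show ?thesis
    unfolding tact_def using \<alpha> by (simp cong: sum.cong)
qed

lemma tact_gslot:
  assumes \<alpha>: "\<alpha> \<in> tidx d n" and j: "j \<in> {1..d}"
  shows "tact d n (gslot d n j A) v \<alpha> = (\<Sum>c<n j. A (\<alpha> j) c * v (\<alpha>(j := c)))"
proof -
  let ?f = "\<lambda>\<beta>. (\<Prod>i\<in>{1..d}. gslot d n j A i (\<alpha> i) (\<beta> i)) * v \<beta>"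
  let ?S = "(\<lambda>c. \<alpha>(j := c)) ` {..<n j}"
  have S: "?S \<subseteq> tidx d n" using tidx_upd[OF \<alpha> j] by auto
  have "?f \<beta> = 0" if \<beta>: "\<beta> \<in> tidx d n - ?S" for \<beta>
  proof -
    have \<beta>j: "\<beta> j < n j" using \<beta> j tidx_less by blast
    have "\<beta> = \<alpha>(j := \<beta> j)" if "\<forall>i\<in>{1..d} - {j}. \<beta> i = \<alpha> i"
      using that \<beta> tidx_upd[OF \<alpha> j \<beta>j] by (intro tidx_eqI) auto
    then obtain i where "i \<in> {1..d}" "i \<noteq> j" "\<beta> i \<noteq> \<alpha> i"
      using \<beta> \<beta>j by (force simp: image_iff)
    then show ?thesis by (auto simp: gslot_def mid_def intro!: prod_zero)
  qed
  then have "tact d n (gslot d n j A) v \<alpha> = sum ?f ?S"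
    unfolding tact_def by (intro sum.mono_neutral_right[OF finite_tidx S]) auto
  also have "\<dots> = (\<Sum>c<n j. ?f (\<alpha>(j := c)))"
    by (rule sum.reindex[unfolded comp_def]) (auto intro!: inj_onI dest: fun_cong[where x=j])
  also have "\<dots> = (\<Sum>c<n j. A (\<alpha> j) c * v (\<alpha>(j := c)))"
  proof (intro sum.cong refl)
    fix c
    have "(\<Prod>i\<in>{1..d}. gslot d n j A i (\<alpha> i) ((\<alpha>(j := c)) i))
        = A (\<alpha> j) c * (\<Prod>i\<in>{1..d} - {j}. mid (n i) (\<alpha> i) (\<alpha> i))"
      using j by (simp add: prod.remove gslot_def)
    also have "\<dots> = A (\<alpha> j) c" using \<alpha> by (simp add: mid_def tidx_less)
    finally show "?f (\<alpha>(j := c)) = A (\<alpha> j) c * v (\<alpha>(j := c))" by simp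
  qed
  finally show ?thesis .
qed

lemma stabilizer_ginverse:
  assumes g: "g \<in> stabilizer d n v"
  shows "ginverse d n g \<in> stabilizer d n v"
proof -
  have gGL: "g \<in> GLprod d n" using g by (simp add: stabilizer_def)
  have "tact d n (ginverse d n g) v \<alpha> = v \<alpha>" if \<alpha>: "\<alpha> \<in> tidx d n" for \<alpha>
  proof -
    have "tact d n (ginverse d n g) v = tact d n (ginverse d n g) (tact d n g v)"
      using g by (intro tact_cong) (simp add: stabilizer_def)
    also have "\<dots> = tact d n (gid d n) v"
      using GLprodD(1)[OF ginverse_GLprod[OF gGL]] by (simp add: tact_gmul gmul_ginverse_left gGL)
    finally show ?thesis using tact_gid[OF \<alpha>] by simp
  qed
  then show ?thesis using ginverse_GLprod[OF gGL] by (simp add: stabilizer_def)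
qed

text \<open>\<open>Z\<cdot>v\<close>, the derivative of \<open>exp(sZ) v\<close> at \<open>s = 0\<close>.\<close>

definition lie_tact :: "nat \<Rightarrow> (nat \<Rightarrow> nat) \<Rightarrow> mat_tuple \<Rightarrow> tensor \<Rightarrow> tensor" where
  "lie_tact d n Z v = (\<lambda>\<alpha>. \<Sum>j\<in>{1..d}. tact d n (gslot d n j (Z j)) v \<alpha>)"

lemma lie_tact_eq:
  "\<alpha> \<in> tidx d n \<Longrightarrow> lie_tact d n Z v \<alpha> = (\<Sum>j\<in>{1..d}. \<Sum>c<n j. Z j (\<alpha> j) c * v (\<alpha>(j := c)))"
  unfolding lie_tact_def by (intro sum.cong refl tact_gslot)

lemma prod_gmul_gexp_gslot:
  assumes j: "j \<in> {1..d}"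
  shows "(\<Prod>i\<in>{1..d}. gmul d n (gexp d n Z s) (gslot d n j (Z j)) i (\<alpha> i) (\<beta> i))
    = mmul (n j) (mexp_scaled (n j) (Z j) s) (Z j) (\<alpha> j) (\<beta> j)
      * (\<Prod>i\<in>{1..d} - {j}. mexp_scaled (n i) (Z i) s (\<alpha> i) (\<beta> i))"
proof -
  have "gmul d n (gexp d n Z s) (gslot d n j (Z j)) i
      = (if i = j then mmul (n j) (mexp_scaled (n j) (Z j) s) (Z j) else mexp_scaled (n i) (Z i) s)"
    if "i \<in> {1..d}" for i
    using that by (simp add: gmul_def gexp_def gslot_def mmul_mid_right)
  then show ?thesis
    using j by (subst prod.remove[OF _ j]) (auto intro!: arg_cong2[where f="(*)"] prod.cong)
qed

lemma tact_gexp_has_derivative: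
  assumes Z: "Z \<in> gl_alg d n"
  shows "((\<lambda>s. tact d n (gexp d n Z s) v \<alpha>) has_real_derivative
           tact d n (gexp d n Z s) (lie_tact d n Z v) \<alpha>) (at s)"
proof -
  let ?E = "\<lambda>i s. mexp_scaled (n i) (Z i) s"
  let ?E' = "\<lambda>j \<beta>. mmul (n j) (?E j s) (Z j) (\<alpha> j) (\<beta> j) * (\<Prod>i\<in>{1..d} - {j}. ?E i s (\<alpha> i) (\<beta> i))"
  have "((\<lambda>s. \<Sum>\<beta>\<in>tidx d n. (\<Prod>i\<in>{1..d}. ?E i s (\<alpha> i) (\<beta> i)) * v \<beta>) has_real_derivative
      (\<Sum>\<beta>\<in>tidx d n. (\<Sum>j\<in>{1..d}. ?E' j \<beta>) * v \<beta>)) (at s)"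
    by (intro DERIV_sum DERIV_cmult_right has_field_derivative_prod mexp_scaled_has_derivative
        gl_alg_mats[OF Z]) auto
  moreover have "(\<lambda>s. tact d n (gexp d n Z s) v \<alpha>)
      = (\<lambda>s. \<Sum>\<beta>\<in>tidx d n. (\<Prod>i\<in>{1..d}. ?E i s (\<alpha> i) (\<beta> i)) * v \<beta>)"
    by (simp add: tact_def gexp_def)
  moreover have "tact d n (gexp d n Z s) (lie_tact d n Z v) \<alpha>
      = (\<Sum>j\<in>{1..d}. tact d n (gmul d n (gexp d n Z s) (gslot d n j (Z j))) v \<alpha>)"
    unfolding lie_tact_def tact_sum by (simp add: tact_gmul GLprodD(1)[OF gexp_GLprod[OF Z]])
  moreover have "\<dots> = (\<Sum>j\<in>{1..d}. \<Sum>\<beta>\<in>tidx d n. ?E' j \<beta> * v \<beta>)"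
    unfolding tact_def by (intro sum.cong refl arg_cong2[where f="(*)"] prod_gmul_gexp_gslot)
  moreover have "\<dots> = (\<Sum>\<beta>\<in>tidx d n. (\<Sum>j\<in>{1..d}. ?E' j \<beta>) * v \<beta>)"
    by (simp only: sum_distrib_right) (rule sum.swap)
  ultimately show ?thesis by simp
qed

lemma lie_alg_stabilizer_iff:
  "Z \<in> lie_alg d n (stabilizer d n v) \<longleftrightarrow> Z \<in> gl_alg d n \<and> (\<forall>\<alpha>\<in>tidx d n. lie_tact d n Z v \<alpha> = 0)"
proof (cases "Z \<in> gl_alg d n")
  case Z: True
  let ?f = "\<lambda>\<alpha> s. tact d n (gexp d n Z s) v \<alpha>"
  have lie_alg: "Z \<in> lie_alg d n (stabilizer d n v) \<longleftrightarrow> (\<forall>\<alpha>\<in>tidx d n. \<forall>s. ?f \<alpha> s = v \<alpha>)"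
    using Z gexp_GLprod[OF Z] by (auto simp: lie_alg_def stabilizer_def texp_scaled)
  have "lie_tact d n Z v \<alpha> = 0" if "\<forall>s. ?f \<alpha> s = v \<alpha>" "\<alpha> \<in> tidx d n" for \<alpha>
  proof -
    have "((\<lambda>s. v \<alpha>) has_real_derivative lie_tact d n Z v \<alpha>) (at 0)"
      using tact_gexp_has_derivative[OF Z, of v \<alpha> 0] that by (simp add: gexp_zero tact_gid)
    then show ?thesis using DERIV_const DERIV_unique by blast
  qed
  moreover have "?f \<alpha> s = v \<alpha>" if lie: "\<forall>\<beta>\<in>tidx d n. lie_tact d n Z v \<beta> = 0" and \<alpha>: "\<alpha> \<in> tidx d n"
    for \<alpha> s
  proof -
    have "tact d n g (lie_tact d n Z v) = tact d n g (\<lambda>\<beta>. 0)" for g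
      using lie by (intro tact_cong) simp
    then have "(?f \<alpha> has_real_derivative 0) (at x)" for x
      using tact_gexp_has_derivative[OF Z, of v \<alpha> x] by simp
    then have "?f \<alpha> s = ?f \<alpha> 0" by (intro DERIV_isconst_all) blast
    then show ?thesis using \<alpha> by (simp add: gexp_zero tact_gid)
  qed
  ultimately show ?thesis using Z lie_alg by blast
qed (simp add: lie_alg_def)

lemma gslot_tconj:
  assumes "g \<in> GLprod d n" "j \<in> {1..d}"
  shows "gslot d n j (tconj d n g Y j) = gmul d n g (gmul d n (gslot d n j (Y j)) (ginverse d n g))"
proof
  fix i
  have "minv (n i) (g i) \<in> mats (n i)" "mmul (n i) (g i) (minv (n i) (g i)) = mid (n i)"
    if "i \<in> {1..d}" using minvertibleD[OF GLprodD(2)[OF assms(1) that]] by simp_all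
  then show "gslot d n j (tconj d n g Y j) i
      = gmul d n g (gmul d n (gslot d n j (Y j)) (ginverse d n g)) i"
    using assms(2) by (simp add: gslot_def gmul_def ginverse_def tconj_def mmul_assoc mmul_mid_left)
qed

lemma lie_alg_stabilizer_tconj:
  assumes g: "g \<in> stabilizer d n v" and Y: "Y \<in> lie_alg d n (stabilizer d n v)"
  shows "tconj d n g Y \<in> lie_alg d n (stabilizer d n v)"
proof -
  have gGL: "g \<in> GLprod d n" using g by (simp add: stabilizer_def)
  have Ygl: "Y \<in> gl_alg d n" and Y0: "\<forall>\<beta>\<in>tidx d n. lie_tact d n Y v \<beta> = 0"
    using Y by (simp_all add: lie_alg_stabilizer_iff)
  have slot: "tact d n (gslot d n j (tconj d n g Y j)) v = tact d n g (tact d n (gslot d n j (Y j)) v)"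
    if j: "j \<in> {1..d}" for j
  proof -
    have "tact d n (gslot d n j (tconj d n g Y j)) v
        = tact d n g (tact d n (gslot d n j (Y j)) (tact d n (ginverse d n g) v))"
      unfolding gslot_tconj[OF gGL j]
      by (simp only: tact_gmul GLprodD(1)[OF gGL] gslot_gl_alg[of "Y j" n j d, OF gl_alg_mats[OF Ygl j]])
    also have "tact d n (gslot d n j (Y j)) (tact d n (ginverse d n g) v) = tact d n (gslot d n j (Y j)) v"
      using stabilizer_ginverse[OF g] by (intro tact_cong) (simp add: stabilizer_def)
    finally show ?thesis .
  qed
  have "lie_tact d n (tconj d n g Y) v = tact d n g (lie_tact d n Y v)"
  proof
    fix \<alpha>
    show "lie_tact d n (tconj d n g Y) v \<alpha> = tact d n g (lie_tact d n Y v) \<alpha>"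
      unfolding lie_tact_def tact_sum by (intro sum.cong refl) (simp only: slot)
  qed
  also have "\<dots> = tact d n g (\<lambda>\<beta>. 0)"
    using Y0 by (intro tact_cong) simp
  finally have "lie_tact d n (tconj d n g Y) v = (\<lambda>\<alpha>. 0)" by simp
  moreover have "tconj d n g Y \<in> gl_alg d n" by (simp add: tconj_def gl_alg_def)
  ultimately show ?thesis by (simp add: lie_alg_stabilizer_iff)
qed


section \<open>The lexicographic bijection \<open>\<iota>\<close>\<close>

definition lex_rank :: "nat \<Rightarrow> nat \<Rightarrow> (nat \<Rightarrow> nat) \<Rightarrow> (nat \<Rightarrow> nat) \<Rightarrow> nat" where
  "lex_rank a d t \<beta> = (\<Sum>i\<in>{a..d}. \<beta> i * (\<Prod>j\<in>{i<..d}. t j))"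

lemma lex_rank_step:
  "a \<le> d \<Longrightarrow> lex_rank a d t \<beta> = \<beta> a * (\<Prod>j\<in>{Suc a..d}. t j) + lex_rank (Suc a) d t \<beta>"
  by (simp add: lex_rank_def sum.atLeast_Suc_atMost atLeastSucAtMost_greaterThanAtMost)

lemma lex_rank_less: "\<forall>i\<in>{a..d}. \<beta> i < t i \<Longrightarrow> lex_rank a d t \<beta> < (\<Prod>i\<in>{a..d}. t i)"
proof (induction "Suc d - a" arbitrary: a)
  case (Suc k)
  show ?case
  proof (cases "a \<le> d")
    case True
    let ?M = "\<Prod>j\<in>{Suc a..d}. t j"
    have "lex_rank (Suc a) d t \<beta> < ?M" using Suc by auto
    moreover have "\<beta> a < t a" using Suc.prems True by simp
    then have "Suc (\<beta> a) * ?M \<le> t a * ?M" by (intro mult_le_mono1) simp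
    ultimately show ?thesis using True by (simp add: lex_rank_step prod.atLeast_Suc_atMost)
  qed (simp add: lex_rank_def)
qed (simp add: lex_rank_def)

lemma lex_rank_inj:
  assumes "\<forall>i\<in>{a..d}. \<beta> i < t i" "\<forall>i\<in>{a..d}. \<beta>' i < t i" "lex_rank a d t \<beta> = lex_rank a d t \<beta>'"
  shows "\<forall>i\<in>{a..d}. \<beta> i = \<beta>' i"
  using assms
proof (induction "Suc d - a" arbitrary: a)
  case (Suc k)
  show ?case
  proof (cases "a \<le> d")
    case True
    let ?M = "\<Prod>j\<in>{Suc a..d}. t j"
    let ?r = "lex_rank (Suc a) d t \<beta>" and ?r' = "lex_rank (Suc a) d t \<beta>'"
    have r: "?r < ?M" "?r' < ?M" using Suc.prems by (auto intro!: lex_rank_less)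
    have M: "0 < ?M" using r(1) by (rule le_less_trans[OF le0])
    have eq: "\<beta> a * ?M + ?r = \<beta>' a * ?M + ?r'" using Suc.prems True by (simp add: lex_rank_step)
    have "\<beta> a = (\<beta> a * ?M + ?r) div ?M" "\<beta>' a = (\<beta>' a * ?M + ?r') div ?M" using r M by simp_all
    then have head: "\<beta> a = \<beta>' a" using eq by simp
    have "?r = (\<beta> a * ?M + ?r) mod ?M" "?r' = (\<beta>' a * ?M + ?r') mod ?M" using r M by simp_all
    then have "?r = ?r'" using eq by simp
    then have "\<forall>i\<in>{Suc a..d}. \<beta> i = \<beta>' i"
      using Suc.prems Suc.hyps(2) by (intro Suc.hyps(1)) auto
    with head show ?thesis by (metis atLeastAtMost_iff le_antisym not_less_eq_eq)
  qed simp
qed simp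

lemma iota_eq_lex_rank: "iota d t \<beta> = lex_rank 2 d t \<beta>"
  by (simp add: iota_def lex_rank_def)

abbreviation tidx_tail :: "nat \<Rightarrow> (nat \<Rightarrow> nat) \<Rightarrow> (nat \<Rightarrow> nat) set" where
  "tidx_tail d t \<equiv> PiE {2..d} (\<lambda>k. {..<t k})"

lemma tidx_tail_less: "\<gamma> \<in> tidx_tail d t \<Longrightarrow> \<forall>i\<in>{2..d}. \<gamma> i < t i"
  by (auto simp: PiE_def Pi_def)

lemma iota_cong: "(\<And>k. k \<in> {2..d} \<Longrightarrow> \<beta> k = \<beta>' k) \<Longrightarrow> iota d t \<beta> = iota d t \<beta>'"
  unfolding iota_def by (intro sum.cong refl) auto

lemma iota_less: "\<forall>i\<in>{2..d}. \<beta> i < t i \<Longrightarrow> iota d t \<beta> < (\<Prod>i\<in>{2..d}. t i)"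
  unfolding iota_eq_lex_rank by (rule lex_rank_less)

lemma iota_eq_0_iff:
  assumes "\<forall>k\<in>{2..d}. 0 < t k"
  shows "iota d t \<beta> = 0 \<longleftrightarrow> (\<forall>k\<in>{2..d}. \<beta> k = 0)"
proof -
  have pos: "0 < (\<Prod>j\<in>{k<..d}. t j)" if "k \<in> {2..d}" for k
  proof (rule prod_pos)
    fix j assume "j \<in> {k<..d}"
    then have "j \<in> {2..d}" using that by simp
    then show "0 < t j" using assms by blast
  qed
  have "\<beta> k * (\<Prod>j\<in>{k<..d}. t j) = 0 \<longleftrightarrow> \<beta> k = 0" if "k \<in> {2..d}" for k
    using pos[OF that] by (metis mult_eq_0_iff not_gr0)
  then show ?thesis
    unfolding iota_def sum_eq_0_iff[OF finite_atLeastAtMost] by (intro ball_cong refl)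
qed

lemma bij_betw_iota: "bij_betw (iota d t) (tidx_tail d t) {..<(\<Prod>i\<in>{2..d}. t i)}"
proof -
  have inj: "inj_on (iota d t) (tidx_tail d t)"
  proof (rule inj_onI)
    fix \<gamma> \<gamma>' assume \<gamma>: "\<gamma> \<in> tidx_tail d t" "\<gamma>' \<in> tidx_tail d t" "iota d t \<gamma> = iota d t \<gamma>'"
    then have "\<forall>i\<in>{2..d}. \<gamma> i = \<gamma>' i"
      using lex_rank_inj[of 2 d \<gamma> t \<gamma>'] tidx_tail_less unfolding iota_eq_lex_rank by blast
    then show "\<gamma> = \<gamma>'" using PiE_ext[OF \<gamma>(1,2)] by blast
  qed
  have "iota d t ` tidx_tail d t \<subseteq> {..<(\<Prod>i\<in>{2..d}. t i)}"
    using iota_less tidx_tail_less by auto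
  moreover have "card (iota d t ` tidx_tail d t) = card {..<(\<Prod>i\<in>{2..d}. t i)}"
    using card_image[OF inj] card_PiE[of "{2..d}" "\<lambda>k. {..<t k}"] by simp
  ultimately have "iota d t ` tidx_tail d t = {..<(\<Prod>i\<in>{2..d}. t i)}"
    by (intro card_subset_eq) auto
  then show ?thesis using inj by (simp add: bij_betw_def)
qed

definition iota_inv :: "nat \<Rightarrow> (nat \<Rightarrow> nat) \<Rightarrow> nat \<Rightarrow> nat \<Rightarrow> nat" where
  "iota_inv d t = the_inv_into (tidx_tail d t) (iota d t)"

lemma iota_inv_tidx_tail: "c < (\<Prod>i\<in>{2..d}. t i) \<Longrightarrow> iota_inv d t c \<in> tidx_tail d t"
  using bij_betwE[OF bij_betw_the_inv_into[OF bij_betw_iota]] by (simp add: iota_inv_def)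

lemma iota_iota_inv: "c < (\<Prod>i\<in>{2..d}. t i) \<Longrightarrow> iota d t (iota_inv d t c) = c"
  using bij_betw_iota unfolding iota_inv_def bij_betw_def by (simp add: f_the_inv_into_f)

lemma iota_inv_iota: "\<gamma> \<in> tidx_tail d t \<Longrightarrow> iota_inv d t (iota d t \<gamma>) = \<gamma>"
  using bij_betw_iota unfolding iota_inv_def bij_betw_def by (simp add: the_inv_into_f_f)

lemma sum_tidx_tail: "(\<Sum>\<gamma>\<in>tidx_tail d t. F \<gamma>) = (\<Sum>c<(\<Prod>i\<in>{2..d}. t i). F (iota_inv d t c))"
  using sum.reindex_bij_betw[OF bij_betw_iota[of d t], of "\<lambda>c. F (iota_inv d t c)"]
  by (simp add: iota_inv_iota cong: sum.cong)


lemma inj_on_lift: "inj_on (\<lambda>\<gamma>. \<gamma>(1 := iota d t \<gamma>)) (tidx_tail d t)"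
proof (rule inj_onI)
  fix \<gamma> \<gamma>' assume \<gamma>: "\<gamma> \<in> tidx_tail d t" "\<gamma>' \<in> tidx_tail d t"
    and eq: "\<gamma>(1 := iota d t \<gamma>) = \<gamma>'(1 := iota d t \<gamma>')"
  have "\<gamma> k = \<gamma>' k" if "k \<in> {2..d}" for k
    using fun_cong[OF eq, of k] that by simp
  then show "\<gamma> = \<gamma>'" by (rule PiE_ext[OF \<gamma>])
qed


section \<open>The tensor \<open>T\<close>\<close>

locale lex_tensor =
  fixes d :: nat and n t :: "nat \<Rightarrow> nat"
  assumes d_pos: "1 \<le> d"
    and t_bounds: "\<forall>i\<in>{1..d}. 0 < t i \<and> t i \<le> n i"
    and t1_eq: "t 1 = (\<Prod>i\<in>{2..d}. t i)"
begin

lemma t_pos: "i \<in> {1..d} \<Longrightarrow> 0 < t i" and t_le_n: "i \<in> {1..d} \<Longrightarrow> t i \<le> n i"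
  using t_bounds by auto

lemma n_pos: "i \<in> {1..d} \<Longrightarrow> 0 < n i"
  using t_pos t_le_n less_le_trans by blast

lemma one_mem: "1 \<in> {1..d}"
  using d_pos by simp

lemma atLeastAtMost_1_eq: "{1..d} = insert 1 {2..d}"
  using d_pos by auto

lemma iota_less_t1: "\<forall>i\<in>{2..d}. \<beta> i < t i \<Longrightarrow> iota d t \<beta> < t 1"
  using iota_less t1_eq by simp

lemma Tten_nonzero:
  assumes "Tten d t \<beta> \<noteq> 0"
  shows "\<beta> 1 = iota d t \<beta>" "i \<in> {1..d} \<Longrightarrow> \<beta> i < t i"
proof -
  have tail: "\<forall>i\<in>{2..d}. \<beta> i < t i" and head: "\<beta> 1 = iota d t \<beta>"
    using assms by (auto simp: Tten_def split: if_splits)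
  show "\<beta> 1 = iota d t \<beta>" by (fact head)
  show "\<beta> i < t i" if "i \<in> {1..d}"
    using that tail head iota_less_t1[OF tail] by (cases "i = 1") auto
qed

lemma tidx_lift:
  assumes \<gamma>: "\<gamma> \<in> tidx_tail d t"
  shows "\<gamma>(1 := iota d t \<gamma>) \<in> tidx d n"
proof -
  have "(\<gamma>(1 := iota d t \<gamma>)) k < n k" if "k \<in> {1..d}" for k
  proof (cases "k = 1")
    case True
    then show ?thesis using iota_less_t1[OF tidx_tail_less[OF \<gamma>]] t_le_n[OF one_mem] by simp
  next
    case False
    then have "k \<in> {2..d}" using that by simp
    then show ?thesis using tidx_tail_less[OF \<gamma>] t_le_n[OF that] False by force
  qed
  moreover have "\<gamma>(1 := iota d t \<gamma>) \<in> extensional {1..d}"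
    unfolding extensional_def
  proof (intro CollectI allI impI)
    fix k assume "k \<notin> {1..d}"
    then have "k \<noteq> 1" "k \<notin> {2..d}" using one_mem by auto
    then show "(\<gamma>(1 := iota d t \<gamma>)) k = undefined" using PiE_arb[OF \<gamma>] by simp
  qed
  ultimately show ?thesis by (simp add: tidx_def PiE_iff)
qed

lemma Tten_lift: "\<gamma> \<in> tidx_tail d t \<Longrightarrow> Tten d t (\<gamma>(1 := iota d t \<gamma>)) = 1"
  using tidx_tail_less iota_cong[of d "\<gamma>(1 := iota d t \<gamma>)" \<gamma> t] by (simp add: Tten_def)

lemma Tten_support:
  assumes \<beta>: "\<beta> \<in> tidx d n" and T: "Tten d t \<beta> \<noteq> 0"
  shows "\<beta> \<in> (\<lambda>\<gamma>. \<gamma>(1 := iota d t \<gamma>)) ` tidx_tail d t"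
proof
  let ?\<gamma> = "restrict \<beta> {2..d}"
  show "?\<gamma> \<in> tidx_tail d t" using Tten_nonzero(2)[OF T] by auto
  have iota_\<gamma>: "iota d t ?\<gamma> = iota d t \<beta>" by (rule iota_cong) simp
  have "\<beta> k = (?\<gamma>(1 := iota d t ?\<gamma>)) k" for k
  proof (cases "k = 1")
    case True
    then show ?thesis using Tten_nonzero(1)[OF T] iota_\<gamma> by (metis fun_upd_same)
  next
    case False
    then show ?thesis using \<beta> tidx_undefined[of \<beta> d n k] by (cases "k \<in> {2..d}") auto
  qed
  then show "\<beta> = ?\<gamma>(1 := iota d t ?\<gamma>)" ..
qed

lemma tact_Tten:
  "tact d n g (Tten d t) \<alpha>
    = (\<Sum>\<gamma>\<in>tidx_tail d t. g 1 (\<alpha> 1) (iota d t \<gamma>) * (\<Prod>k\<in>{2..d}. g k (\<alpha> k) (\<gamma> k)))"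
proof -
  let ?lift = "\<lambda>\<gamma>. \<gamma>(1 := iota d t \<gamma>)"
  let ?f = "\<lambda>\<beta>. (\<Prod>k\<in>{1..d}. g k (\<alpha> k) (\<beta> k)) * Tten d t \<beta>"
  have "tact d n g (Tten d t) \<alpha> = sum ?f (?lift ` tidx_tail d t)"
    unfolding tact_def using tidx_lift Tten_support by (intro sum.mono_neutral_right) auto
  also have "\<dots> = (\<Sum>\<gamma>\<in>tidx_tail d t. ?f (?lift \<gamma>))"
    by (rule sum.reindex[OF inj_on_lift, unfolded comp_def])
  also have "\<dots> = (\<Sum>\<gamma>\<in>tidx_tail d t. g 1 (\<alpha> 1) (iota d t \<gamma>) * (\<Prod>k\<in>{2..d}. g k (\<alpha> k) (\<gamma> k)))"
  proof (intro sum.cong refl)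
    fix \<gamma> assume \<gamma>: "\<gamma> \<in> tidx_tail d t"
    have "(\<Prod>k\<in>{2..d}. g k (\<alpha> k) (?lift \<gamma> k)) = (\<Prod>k\<in>{2..d}. g k (\<alpha> k) (\<gamma> k))"
      by (intro prod.cong) auto
    then show "?f (?lift \<gamma>) = g 1 (\<alpha> 1) (iota d t \<gamma>) * (\<Prod>k\<in>{2..d}. g k (\<alpha> k) (\<gamma> k))"
      unfolding atLeastAtMost_1_eq using Tten_lift[OF \<gamma>] by simp
  qed
  finally show ?thesis .
qed

end

section \<open>Shears and the non-reductive case\<close>

definition eunit :: "nat \<Rightarrow> nat \<Rightarrow> real_mat" where
  "eunit a b = (\<lambda>x y. if x = a \<and> y = b then 1 else 0)"

definition shear :: "nat \<Rightarrow> nat \<Rightarrow> real \<Rightarrow> real_mat" where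
  "shear m b c = (\<lambda>x y. mid m x y + c * eunit 0 b x y)"

lemma eunit_mats: "a < m \<Longrightarrow> b < m \<Longrightarrow> eunit a b \<in> mats m"
  by (auto simp: mats_def eunit_def)

lemma shear_mats: "b < m \<Longrightarrow> shear m b c \<in> mats m"
  by (auto simp: mats_def shear_def mid_def eunit_def)

lemma mmul_shear_left:
  assumes "A \<in> mats m" "b < m"
  shows "mmul m (shear m b c) A = (\<lambda>x y. A x y + c * (if x = 0 then A b y else 0))"
proof (intro ext)
  fix x y
  show "mmul m (shear m b c) A x y = A x y + c * (if x = 0 then A b y else 0)"
  proof (cases "x < m \<and> y < m")
    case True
    then show ?thesis using assms(2)
      by (simp add: mmul_def shear_def mid_def eunit_def distrib_right sum.distrib mult.assoc
          if_distrib[of "\<lambda>u. u * _"] sum_distrib_left[symmetric] sum.delta cong: if_cong)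
  qed (use assms in \<open>auto simp: mmul_def mats_outside\<close>)
qed

lemma mmul_shear_right:
  assumes "A \<in> mats m" "b < m"
  shows "mmul m A (shear m b c) = (\<lambda>x y. A x y + c * (if y = b then A x 0 else 0))"
proof (intro ext)
  fix x y
  show "mmul m A (shear m b c) x y = A x y + c * (if y = b then A x 0 else 0)"
  proof (cases "x < m \<and> y < m")
    case True
    then show ?thesis using assms(2)
      by (simp add: mmul_def shear_def mid_def eunit_def distrib_left sum.distrib mult.assoc
          if_distrib[of "\<lambda>u. _ * u"] sum_distrib_left[symmetric] sum.delta cong: if_cong)
  qed (use assms in \<open>auto simp: mmul_def mats_outside\<close>)
qed

lemma mmul_shear:
  assumes "b \<noteq> 0" "b < m"
  shows "mmul m (shear m b c) (shear m b c') = shear m b (c + c')"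
  unfolding mmul_shear_left[OF shear_mats[OF assms(2)] assms(2)]
  using assms by (auto simp: shear_def mid_def eunit_def algebra_simps intro!: ext)

lemma shear_minvertible:
  assumes "b \<noteq> 0" "b < m"
  shows "minvertible m (shear m b c)" "minv m (shear m b c) = shear m b (-c)"
proof -
  have "shear m b 0 = mid m" by (simp add: shear_def)
  then have "mmul m (shear m b c) (shear m b (-c)) = mid m"
    "mmul m (shear m b (-c)) (shear m b c) = mid m"
    using mmul_shear[OF assms] by simp_all
  then show "minvertible m (shear m b c)" "minv m (shear m b c) = shear m b (-c)"
    using shear_mats[OF assms(2)] by (auto intro: minvertibleI minv_eqI)
qed

lemma shear_conj:
  assumes "A \<in> mats m" "b < m"
  shows "mmul m (mmul m (shear m b c) A) (shear m b (-c)) = (\<lambda>x y. A x y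
    + c * (if x = 0 then A b y else 0) - c * (if y = b then A x 0 else 0)
    - c\<^sup>2 * (if x = 0 \<and> y = b then A b 0 else 0))"
proof -
  have right: "mmul m (mmul m (shear m b c) A) (shear m b (-c)) = (\<lambda>x y. mmul m (shear m b c) A x y
      + (-c) * (if y = b then mmul m (shear m b c) A x 0 else 0))"
    by (rule mmul_shear_right[OF mmul_mats assms(2)])
  show ?thesis
    unfolding right unfolding mmul_shear_left[OF assms]
    by (auto simp: power2_eq_square algebra_simps fun_eq_iff)
qed

context lex_tensor
begin

lemma Tten_single:
  assumes i: "i \<in> {1..d}"
  shows "Tten d t ((\<lambda>k\<in>{1..d}. 0)(i := c)) = (if c = 0 then 1 else 0)"
proof -
  let ?\<beta> = "(\<lambda>k\<in>{1..d}. 0)(i := c)"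
  have tail_pos: "\<forall>k\<in>{2..d}. 0 < t k" using t_pos by simp
  have iota_\<beta>: "iota d t ?\<beta> = 0 \<longleftrightarrow> (i \<in> {2..d} \<longrightarrow> c = 0)"
    using iota_eq_0_iff[OF tail_pos, of ?\<beta>] by auto
  show ?thesis
  proof (cases "c = 0")
    case True
    then show ?thesis using iota_\<beta> tail_pos one_mem by (simp add: Tten_def)
  next
    case False
    have "Tten d t ?\<beta> = 0"
    proof (rule ccontr)
      assume "Tten d t ?\<beta> \<noteq> 0"
      then have "?\<beta> 1 = iota d t ?\<beta>" by (rule Tten_nonzero)
      then show False using iota_\<beta> False i one_mem by (cases "i = 1") auto
    qed
    then show ?thesis using False by simp
  qed
qed

context
  fixes i assumes i: "i \<in> {1..d}" and t_less_n: "t i < n i"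
begin

lemma shear_stabilizer: "gslot d n i (shear (n i) (t i) c) \<in> stabilizer d n (Tten d t)"
proof -
  have ti: "t i \<noteq> 0" using t_pos[OF i] by simp
  have GL: "gslot d n i (shear (n i) (t i) c) \<in> GLprod d n"
    using shear_minvertible[OF ti t_less_n] mid_minvertible shear_mats[OF t_less_n]
    by (simp add: GLprod_def gslot_gl_alg) (simp add: gslot_def)
  have "tact d n (gslot d n i (shear (n i) (t i) c)) (Tten d t) \<alpha> = Tten d t \<alpha>"
    if \<alpha>: "\<alpha> \<in> tidx d n" for \<alpha>
  proof -
    have "Tten d t (\<alpha>(i := t i)) = 0" using Tten_nonzero(2)[of "\<alpha>(i := t i)" i] i by auto
    then have "(\<Sum>y<n i. shear (n i) (t i) c (\<alpha> i) y * Tten d t (\<alpha>(i := y))) = Tten d t \<alpha>"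
      using tidx_less[OF \<alpha> i] t_less_n
      by (simp add: shear_def mid_def eunit_def distrib_right sum.distrib mult.assoc
          if_distrib[of "\<lambda>u. u * _"] sum_distrib_left[symmetric] sum.delta cong: if_cong)
    then show ?thesis by (simp add: tact_gslot[OF \<alpha> i])
  qed
  then show ?thesis using GL by (simp add: stabilizer_def)
qed

lemma tconj_shear:
  assumes p: "p \<in> gl_alg d n"
  shows "tconj d n (gslot d n i (shear (n i) (t i) c)) p
       = p(i := mmul (n i) (mmul (n i) (shear (n i) (t i) c) (p i)) (shear (n i) (t i) (-c)))"
proof
  fix k
  have ti: "t i \<noteq> 0" using t_pos[OF i] by simp
  show "tconj d n (gslot d n i (shear (n i) (t i) c)) p k
      = (p(i := mmul (n i) (mmul (n i) (shear (n i) (t i) c) (p i)) (shear (n i) (t i) (-c)))) k"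
    using i shear_minvertible(2)[OF ti t_less_n] gl_alg_mats[OF p] gl_alg_outside[OF p]
    by (auto simp: tconj_def gslot_def minv_mid mmul_mid_left mmul_mid_right)
qed

lemma eunit_lie_alg: "(\<lambda>k a b. 0)(i := eunit 0 (t i)) \<in> lie_alg d n (stabilizer d n (Tten d t))"
  unfolding lie_alg_stabilizer_iff
proof (intro conjI ballI)
  show "(\<lambda>k a b. 0)(i := eunit 0 (t i)) \<in> gl_alg d n"
    using i eunit_mats[of 0 "n i" "t i"] t_less_n by (simp add: gl_alg_def mats_def)
  fix \<alpha> assume \<alpha>: "\<alpha> \<in> tidx d n"
  have "Tten d t (\<alpha>(i := t i)) = 0" using Tten_nonzero(2)[of "\<alpha>(i := t i)" i] i by auto
  then show "lie_tact d n ((\<lambda>k a b. 0)(i := eunit 0 (t i))) (Tten d t) \<alpha> = 0"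
    unfolding lie_tact_eq[OF \<alpha>] by (intro sum.neutral ballI) (auto simp: eunit_def)
qed

lemma spike_tidx: "(\<lambda>k\<in>{1..d}. 0)(i := t i) \<in> tidx d n"
  using i t_less_n n_pos by (simp add: tidx_def PiE_iff extensional_def)

lemma lie_tact_Tten_spike: "lie_tact d n Y (Tten d t) ((\<lambda>k\<in>{1..d}. 0)(i := t i)) = Y i (t i) 0"
proof -
  let ?\<alpha> = "(\<lambda>k\<in>{1..d}. 0)(i := t i)"
  have other: "(\<Sum>c<n j. Y j (?\<alpha> j) c * Tten d t (?\<alpha>(j := c))) = 0" if "j \<in> {1..d} - {i}" for j
  proof -
    have "Tten d t (?\<alpha>(j := c)) = 0" for c
      using that i Tten_nonzero(2)[of "?\<alpha>(j := c)" i] by auto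
    then show ?thesis by simp
  qed
  have "lie_tact d n Y (Tten d t) ?\<alpha> = (\<Sum>c<n i. Y i (t i) c * Tten d t ((\<lambda>k\<in>{1..d}. 0)(i := c)))"
    unfolding lie_tact_eq[OF spike_tidx] sum.remove[OF finite_atLeastAtMost i] using other by simp
  also have "\<dots> = Y i (t i) 0"
    unfolding Tten_single[OF i] using t_less_n by (simp add: if_distrib[of "\<lambda>u. _ * u"] cong: if_cong)
  finally show ?thesis .
qed

lemma shear_conj_average:
  assumes p: "p \<in> gl_alg d n"
  shows "(\<lambda>k a b. tconj d n (gslot d n i (shear (n i) (t i) 1)) p k a b
          + tconj d n (gslot d n i (shear (n i) (t i) (-1))) p k a b + (-2) * p k a b)
       = (\<lambda>k a b. (-2 * p i (t i) 0) * ((\<lambda>k a b. 0)(i := eunit 0 (t i))) k a b)"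
  unfolding tconj_shear[OF p] shear_conj[OF gl_alg_mats[OF p i] t_less_n]
  by (simp add: fun_eq_iff eunit_def)

lemma invariant_complement_entry_eq_0:
  assumes P: "lin_subspace P" "P \<subseteq> gl_alg d n"
    "P \<inter> lie_alg d n (stabilizer d n (Tten d t)) = {(\<lambda>i a b. 0)}"
    "\<forall>h\<in>stabilizer d n (Tten d t). \<forall>X\<in>P. tconj d n h X \<in> P"
    and p: "p \<in> P"
  shows "p i (t i) 0 = 0"
proof (rule ccontr)
  let ?E = "(\<lambda>k a b. 0)(i := eunit 0 (t i))"
  assume nonzero: "p i (t i) 0 \<noteq> 0"
  have add: "\<And>X Y. X \<in> P \<Longrightarrow> Y \<in> P \<Longrightarrow> (\<lambda>i a b. X i a b + Y i a b) \<in> P"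
    and scale: "\<And>c X. X \<in> P \<Longrightarrow> (\<lambda>i a b. c * X i a b) \<in> P"
    using P(1) unfolding lin_subspace_def by blast+
  have conj: "tconj d n (gslot d n i (shear (n i) (t i) c)) p \<in> P" for c
    using P(4) shear_stabilizer p by blast
  have "(\<lambda>k a b. tconj d n (gslot d n i (shear (n i) (t i) 1)) p k a b
      + tconj d n (gslot d n i (shear (n i) (t i) (-1))) p k a b + (-2) * p k a b) \<in> P"
    by (rule add[OF add[OF conj conj] scale[OF p]])
  then have "(\<lambda>k a b. (-2 * p i (t i) 0) * ?E k a b) \<in> P"
    unfolding shear_conj_average[OF subsetD[OF P(2) p]] .
  from scale[OF this, of "-1 / (2 * p i (t i) 0)"] have "?E \<in> P"
    using nonzero by (simp add: fun_eq_iff fun_upd_def)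
  then have "?E = (\<lambda>i a b. 0)" using P(3) eunit_lie_alg by blast
  then have "?E i 0 (t i) = 0" by simp
  then show False by (simp add: eunit_def)
qed

end

lemma n_eq_t_if_reductive:
  assumes "reductive d n (stabilizer d n (Tten d t))"
  shows "\<forall>i\<in>{1..d}. n i = t i"
proof (rule ccontr)
  assume "\<not> ?thesis"
  then obtain i where i: "i \<in> {1..d}" and t_less_n: "t i < n i" using t_le_n by force
  obtain P where P: "lin_subspace P" "P \<subseteq> gl_alg d n"
    "P \<inter> lie_alg d n (stabilizer d n (Tten d t)) = {(\<lambda>i a b. 0)}"
    "\<forall>h\<in>stabilizer d n (Tten d t). \<forall>X\<in>P. tconj d n h X \<in> P"
    and P_sum: "\<forall>Z\<in>gl_alg d n. \<exists>X\<in>P. \<exists>Y\<in>lie_alg d n (stabilizer d n (Tten d t)).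
      Z = (\<lambda>i a b. X i a b + Y i a b)"
    using assms unfolding reductive_def by blast
  have "(\<lambda>k a b. 0)(i := eunit (t i) 0) \<in> gl_alg d n"
    using i eunit_mats[of "t i" "n i" 0] t_less_n by (simp add: gl_alg_def mats_def)
  then obtain p y where p: "p \<in> P" and y: "y \<in> lie_alg d n (stabilizer d n (Tten d t))"
    and split: "(\<lambda>k a b. 0)(i := eunit (t i) 0) = (\<lambda>k a b. p k a b + y k a b)"
    using P_sum by blast
  have "p i (t i) 0 = 0" by (rule invariant_complement_entry_eq_0[OF i t_less_n P p])
  moreover have "y i (t i) 0 = 0"
    using y spike_tidx[OF i t_less_n] lie_tact_Tten_spike[OF i t_less_n, of y]
    by (simp add: lie_alg_stabilizer_iff)
  moreover have "p i (t i) 0 + y i (t i) 0 = 1"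
    using fun_cong[OF fun_cong[OF fun_cong[OF split, of i], of "t i"], of 0] by (simp add: eunit_def)
  ultimately show False by simp
qed

end

section \<open>The case \<open>n = t\<close>\<close>

definition gl_first_factor :: "nat \<Rightarrow> (nat \<Rightarrow> nat) \<Rightarrow> mat_tuple set" where
  "gl_first_factor d n = {Z \<in> gl_alg d n. \<forall>k\<in>{2..d}. Z k = (\<lambda>a b. 0)}"

lemma lin_subspace_gl_first_factor: "lin_subspace (gl_first_factor d n)"
  by (auto simp: lin_subspace_def gl_first_factor_def gl_alg_def mats_def)

lemma tconj_gl_first_factor: "X \<in> gl_first_factor d n \<Longrightarrow> tconj d n h X \<in> gl_first_factor d n"
  by (auto simp: gl_first_factor_def tconj_def gl_alg_def)

locale square_lex_tensor = lex_tensor +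
  assumes n_eq_t: "\<forall>i\<in>{1..d}. n i = t i"
begin

lemma n1_eq: "n 1 = t 1"
  using n_eq_t one_mem by blast

lemma tidx_less_t: "\<alpha> \<in> tidx d n \<Longrightarrow> i \<in> {1..d} \<Longrightarrow> \<alpha> i < t i"
  using tidx_less n_eq_t by force

lemma tidx_iota_less: "\<alpha> \<in> tidx d n \<Longrightarrow> iota d t \<alpha> < t 1"
  using tidx_less_t by (intro iota_less_t1) simp

lemma iota_inv_props:
  assumes "c < t 1"
  shows "iota_inv d t c \<in> tidx_tail d t" "iota d t (iota_inv d t c) = c"
  using assms t1_eq iota_inv_tidx_tail iota_iota_inv by simp_all

lemma tidx_of_pair:
  assumes "a < t 1" "c < t 1"
  shows "(iota_inv d t c)(1 := a) \<in> tidx d n" "iota d t ((iota_inv d t c)(1 := a)) = c"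
proof -
  note \<gamma> = iota_inv_props[OF assms(2)]
  have "iota_inv d t c k < n k" if "k \<in> {2..d}" for k
    using tidx_tail_less[OF \<gamma>(1)] n_eq_t that by force
  moreover have "iota_inv d t c k = undefined" if "k \<notin> {2..d}" for k
    using PiE_arb[OF \<gamma>(1) that] .
  ultimately show "(iota_inv d t c)(1 := a) \<in> tidx d n"
    using assms(1) n1_eq atLeastAtMost_1_eq by (auto simp: tidx_def PiE_iff extensional_def)
  have "iota d t ((iota_inv d t c)(1 := a)) = iota d t (iota_inv d t c)" by (rule iota_cong) simp
  then show "iota d t ((iota_inv d t c)(1 := a)) = c" using \<gamma>(2) by simp
qed

lemma iota_inv_iota_tidx:
  assumes \<alpha>: "\<alpha> \<in> tidx d n"
  shows "(iota_inv d t (iota d t \<alpha>))(1 := \<alpha> 1) = \<alpha>"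
proof -
  let ?\<gamma> = "restrict \<alpha> {2..d}"
  have \<gamma>: "?\<gamma> \<in> tidx_tail d t" using tidx_less_t[OF \<alpha>] by auto
  have "iota d t \<alpha> = iota d t ?\<gamma>" by (rule iota_cong) simp
  then have "iota_inv d t (iota d t \<alpha>) = ?\<gamma>" using iota_inv_iota[OF \<gamma>] by simp
  moreover have "(?\<gamma>(1 := \<alpha> 1)) k = \<alpha> k" for k
    using tidx_undefined[OF \<alpha>, of k] atLeastAtMost_1_eq by (cases "k \<in> {1..d}") auto
  ultimately show ?thesis by auto
qed

lemma Tten_tidx: "\<alpha> \<in> tidx d n \<Longrightarrow> Tten d t \<alpha> = mid (t 1) (\<alpha> 1) (iota d t \<alpha>)"
  using tidx_less_t[of \<alpha>] tidx_iota_less[of \<alpha>] one_mem atLeastAtMost_1_eq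
  by (auto simp: Tten_def mid_def)

lemma Tten_upd_1:
  assumes "\<alpha> \<in> tidx d n"
  shows "Tten d t (\<alpha>(1 := c)) = (if c = iota d t \<alpha> then 1 else 0)"
proof -
  have "iota d t (\<alpha>(1 := c)) = iota d t \<alpha>" by (rule iota_cong) simp
  then show ?thesis using tidx_less_t[OF assms] atLeastAtMost_1_eq by (simp add: Tten_def)
qed

lemma lie_tact_Tten:
  assumes \<alpha>: "\<alpha> \<in> tidx d n"
  shows "lie_tact d n Z (Tten d t) \<alpha>
    = Z 1 (\<alpha> 1) (iota d t \<alpha>) + lie_tact d n (Z(1 := (\<lambda>a b. 0))) (Tten d t) \<alpha>"
proof -
  let ?S = "\<lambda>Z. \<Sum>j\<in>{2..d}. \<Sum>c<n j. Z j (\<alpha> j) c * Tten d t (\<alpha>(j := c))"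
  have "(\<Sum>c<n 1. Z 1 (\<alpha> 1) c * Tten d t (\<alpha>(1 := c))) = Z 1 (\<alpha> 1) (iota d t \<alpha>)"
    unfolding Tten_upd_1[OF \<alpha>] n1_eq using tidx_iota_less[OF \<alpha>]
    by (simp add: if_distrib[of "\<lambda>u. _ * u"] cong: if_cong)
  moreover have "?S (Z(1 := (\<lambda>a b. 0))) = ?S Z" by (intro sum.cong refl) auto
  ultimately show ?thesis
    unfolding lie_tact_eq[OF \<alpha>] atLeastAtMost_1_eq by simp
qed

lemma lie_tact_gl_first_factor:
  assumes "X \<in> gl_first_factor d n" "\<alpha> \<in> tidx d n"
  shows "lie_tact d n X (Tten d t) \<alpha> = X 1 (\<alpha> 1) (iota d t \<alpha>)"
proof -
  have "(X(1 := (\<lambda>a b. 0))) k = (\<lambda>a b. 0)" for k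
    using assms(1) by (cases "k \<in> {2..d}") (auto simp: gl_first_factor_def gl_alg_def)
  then have "X(1 := (\<lambda>a b. 0)) = (\<lambda>k a b. 0)" ..
  then show ?thesis using lie_tact_Tten[OF assms(2), of X] by (simp add: lie_tact_eq[OF assms(2)])
qed

lemma gl_first_factor_inter_lie_alg:
  "gl_first_factor d n \<inter> lie_alg d n (stabilizer d n (Tten d t)) = {(\<lambda>i a b. 0)}"
proof (intro equalityI subsetI)
  fix X assume "X \<in> gl_first_factor d n \<inter> lie_alg d n (stabilizer d n (Tten d t))"
  then have X: "X \<in> gl_first_factor d n" and lie: "\<forall>\<alpha>\<in>tidx d n. lie_tact d n X (Tten d t) \<alpha> = 0"
    by (simp_all add: lie_alg_stabilizer_iff)
  have X_gl: "X \<in> gl_alg d n" using X by (simp add: gl_first_factor_def)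
  have "X 1 a c = 0" for a c
  proof (cases "a < t 1 \<and> c < t 1")
    case True
    note pair = tidx_of_pair[OF conjunct1[OF True] conjunct2[OF True]]
    show ?thesis
      using lie pair lie_tact_gl_first_factor[OF X pair(1)] by simp
  qed (use gl_alg_mats[OF X_gl one_mem] n1_eq in \<open>auto simp: mats_outside\<close>)
  then have "X k = (\<lambda>a b. 0)" for k
    using X gl_alg_outside[OF X_gl, of k] atLeastAtMost_1_eq
    by (cases "k \<in> {1..d}") (auto simp: gl_first_factor_def)
  then show "X \<in> {(\<lambda>i a b. 0)}" by auto
qed (simp add: gl_first_factor_def gl_alg_def mats_def lie_alg_stabilizer_iff lie_tact_eq)

lemma gl_first_factor_plus_lie_alg:
  assumes Z: "Z \<in> gl_alg d n"
  shows "\<exists>X\<in>gl_first_factor d n. \<exists>Y\<in>lie_alg d n (stabilizer d n (Tten d t)).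
    Z = (\<lambda>i a b. X i a b + Y i a b)"
proof -
  let ?R = "lie_tact d n (Z(1 := (\<lambda>a b. 0))) (Tten d t)"
  define Y where "Y = Z(1 := (\<lambda>a c. if a < t 1 \<and> c < t 1 then - ?R ((iota_inv d t c)(1 := a)) else 0))"
  have Y_gl: "Y \<in> gl_alg d n"
    using Z one_mem n1_eq by (auto simp: Y_def gl_alg_def mats_def)
  have Y_1: "Y(1 := (\<lambda>a b. 0)) = Z(1 := (\<lambda>a b. 0))" by (simp add: Y_def)
  have "lie_tact d n Y (Tten d t) \<alpha> = 0" if \<alpha>: "\<alpha> \<in> tidx d n" for \<alpha>
  proof -
    have "Y 1 (\<alpha> 1) (iota d t \<alpha>) = - ?R ((iota_inv d t (iota d t \<alpha>))(1 := \<alpha> 1))"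
      using tidx_less_t[OF \<alpha> one_mem] tidx_iota_less[OF \<alpha>] by (simp add: Y_def)
    then show ?thesis
      using lie_tact_Tten[OF \<alpha>, of Y] unfolding Y_1 iota_inv_iota_tidx[OF \<alpha>] by simp
  qed
  then have Y: "Y \<in> lie_alg d n (stabilizer d n (Tten d t))"
    using Y_gl by (simp add: lie_alg_stabilizer_iff)
  have "(\<lambda>i a b. Z i a b - Y i a b) \<in> gl_first_factor d n"
    using Z Y_gl by (auto simp: gl_first_factor_def gl_alg_def mats_def Y_def)
  then show ?thesis using Y by force
qed

theorem reductive_stabilizer_Tten: "reductive d n (stabilizer d n (Tten d t))"
  unfolding reductive_def
  using lin_subspace_gl_first_factor gl_first_factor_inter_lie_alg gl_first_factor_plus_lie_alg
    tconj_gl_first_factor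
  by (intro exI[of _ "gl_first_factor d n"]) (auto simp: gl_first_factor_def)

end

section \<open>Transposes and the orthogonal complement\<close>

definition gtranspose :: "nat \<Rightarrow> (nat \<Rightarrow> nat) \<Rightarrow> mat_tuple \<Rightarrow> mat_tuple" where
  "gtranspose d n h = (\<lambda>k. if k \<in> {1..d} then mtranspose (h k) else (\<lambda>a b. 0))"

lemma gtranspose_GLprod: "h \<in> GLprod d n \<Longrightarrow> gtranspose d n h \<in> GLprod d n"
  using mtranspose_mats minvertible_mtranspose(1) by (auto simp: GLprod_def gl_alg_def gtranspose_def)

lemma tinner_eq_sum_minner: "tinner d n Z Z' = (\<Sum>i\<in>{1..d}. minner (n i) (Z i) (Z' i))"
  by (simp add: tinner_def minner_def)

lemma tinner_tconj:
  assumes "h \<in> GLprod d n"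
  shows "tinner d n (tconj d n h Z) Y = tinner d n Z (tconj d n (gtranspose d n h) Y)"
  unfolding tinner_eq_sum_minner
proof (intro sum.cong refl)
  fix i assume i: "i \<in> {1..d}"
  show "minner (n i) (tconj d n h Z i) (Y i) = minner (n i) (Z i) (tconj d n (gtranspose d n h) Y i)"
    using minner_conj minvertible_mtranspose(2)[OF GLprodD(2)[OF assms i]] i
    by (simp add: tconj_def gtranspose_def)
qed

text \<open>The Kronecker product \<open>h\<^sub>2 \<otimes> \<dots> \<otimes> h\<^sub>d\<close>, with row and column multi-indices encoded by \<open>\<iota>\<close>.\<close>

definition kron_tail :: "nat \<Rightarrow> (nat \<Rightarrow> nat) \<Rightarrow> mat_tuple \<Rightarrow> real_mat" where
  "kron_tail d t h = (\<lambda>e c. if e < (\<Prod>i\<in>{2..d}. t i) \<and> c < (\<Prod>i\<in>{2..d}. t i)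
      then \<Prod>k\<in>{2..d}. h k (iota_inv d t e k) (iota_inv d t c k) else 0)"

lemma kron_tail_mats: "kron_tail d t h \<in> mats (\<Prod>i\<in>{2..d}. t i)"
  by (simp add: kron_tail_def mats_def)

lemma kron_tail_gtranspose: "kron_tail d t (gtranspose d n h) = mtranspose (kron_tail d t h)"
  by (auto simp: kron_tail_def gtranspose_def mtranspose_def intro!: ext prod.cong)

context square_lex_tensor
begin

lemma tact_Tten_square:
  assumes \<alpha>: "\<alpha> \<in> tidx d n"
  shows "tact d n h (Tten d t) \<alpha> = mmul (t 1) (h 1) (mtranspose (kron_tail d t h)) (\<alpha> 1) (iota d t \<alpha>)"
proof -
  have tail: "iota_inv d t (iota d t \<alpha>) k = \<alpha> k" if "k \<in> {2..d}" for k
    using fun_cong[OF iota_inv_iota_tidx[OF \<alpha>], of k] that by auto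
  have "tact d n h (Tten d t) \<alpha>
      = (\<Sum>c<t 1. h 1 (\<alpha> 1) (iota d t (iota_inv d t c)) * (\<Prod>k\<in>{2..d}. h k (\<alpha> k) (iota_inv d t c k)))"
    unfolding tact_Tten sum_tidx_tail t1_eq ..
  also have "\<dots> = (\<Sum>c<t 1. h 1 (\<alpha> 1) c * kron_tail d t h (iota d t \<alpha>) c)"
    using tidx_iota_less[OF \<alpha>] iota_inv_props(2) tail
    by (intro sum.cong refl) (simp add: kron_tail_def t1_eq[symmetric])
  also have "\<dots> = mmul (t 1) (h 1) (mtranspose (kron_tail d t h)) (\<alpha> 1) (iota d t \<alpha>)"
    using tidx_less_t[OF \<alpha> one_mem] tidx_iota_less[OF \<alpha>] by (simp add: mmul_def mtranspose_def)
  finally show ?thesis .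
qed

lemma stabilizer_Tten_iff:
  "h \<in> stabilizer d n (Tten d t) \<longleftrightarrow>
     h \<in> GLprod d n \<and> mmul (t 1) (h 1) (mtranspose (kron_tail d t h)) = mid (t 1)"
proof -
  let ?M = "mmul (t 1) (h 1) (mtranspose (kron_tail d t h))"
  have "(\<forall>\<alpha>\<in>tidx d n. tact d n h (Tten d t) \<alpha> = Tten d t \<alpha>) \<longleftrightarrow> ?M = mid (t 1)"
  proof
    assume fixes_T: "\<forall>\<alpha>\<in>tidx d n. tact d n h (Tten d t) \<alpha> = Tten d t \<alpha>"
    show "?M = mid (t 1)"
    proof (intro ext)
      fix a c
      show "?M a c = mid (t 1) a c"
      proof (cases "a < t 1 \<and> c < t 1")
        case True
        let ?\<alpha> = "(iota_inv d t c)(1 := a)"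
        note pair = tidx_of_pair[OF conjunct1[OF True] conjunct2[OF True]]
        have "?M (?\<alpha> 1) (iota d t ?\<alpha>) = mid (t 1) (?\<alpha> 1) (iota d t ?\<alpha>)"
          using bspec[OF fixes_T pair(1)] unfolding tact_Tten_square[OF pair(1)] Tten_tidx[OF pair(1)] .
        then show ?thesis unfolding pair(2) fun_upd_same .
      qed (auto simp: mmul_def mid_def)
    qed
  qed (simp add: tact_Tten_square Tten_tidx)
  then show ?thesis by (auto simp: stabilizer_def)
qed

lemma stabilizer_gtranspose:
  assumes h: "h \<in> stabilizer d n (Tten d t)"
  shows "gtranspose d n h \<in> stabilizer d n (Tten d t)"
proof -
  let ?K = "mtranspose (kron_tail d t h)"
  have GL: "h \<in> GLprod d n" and hK: "mmul (t 1) (h 1) ?K = mid (t 1)"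
    using h stabilizer_Tten_iff by blast+
  have inv: "minvertible (t 1) (h 1)" using GLprodD(2)[OF GL one_mem] n1_eq by simp
  have K: "?K \<in> mats (t 1)" using mtranspose_mats[OF kron_tail_mats] t1_eq by simp
  have "mmul (t 1) ?K (h 1) = mid (t 1)"
    using minv_eq_right_inverse[OF inv K hK] minvertibleD(3)[OF inv] by simp
  moreover have "gtranspose d n h 1 = mtranspose (h 1)" using one_mem by (simp add: gtranspose_def)
  ultimately have
    "mmul (t 1) (gtranspose d n h 1) (mtranspose (kron_tail d t (gtranspose d n h))) = mid (t 1)"
    using mtranspose_mmul[of "t 1" ?K "h 1"] by (simp add: kron_tail_gtranspose)
  then show ?thesis using gtranspose_GLprod[OF GL] stabilizer_Tten_iff by blast
qed

theorem orth_compl_tconj: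
  assumes h: "h \<in> stabilizer d n (Tten d t)"
    and Z: "Z \<in> orth_compl d n (lie_alg d n (stabilizer d n (Tten d t)))"
  shows "tconj d n h Z \<in> orth_compl d n (lie_alg d n (stabilizer d n (Tten d t)))"
proof -
  have GL: "h \<in> GLprod d n" using h by (simp add: stabilizer_def)
  have "tinner d n (tconj d n h Z) Y = 0" if Y: "Y \<in> lie_alg d n (stabilizer d n (Tten d t))" for Y
    using Z lie_alg_stabilizer_tconj[OF stabilizer_gtranspose[OF h] Y]
    by (simp add: tinner_tconj[OF GL] orth_compl_def)
  moreover have "tconj d n h Z \<in> gl_alg d n" by (simp add: tconj_def gl_alg_def)
  ultimately show ?thesis by (simp add: orth_compl_def)
qed

end

theorem mainTheorem10:
  fixes d :: nat and n t :: "nat \<Rightarrow> nat"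
  assumes "d \<ge> 3"
    and "\<forall>i\<in>{1..d}. n i \<ge> 2"
    and "\<forall>i\<in>{1..d}. 0 < t i \<and> t i \<le> n i"
    and "t 1 = (\<Prod>i\<in>{2..d}. t i)"
  shows "(reductive d n (stabilizer d n (Tten d t)) \<longleftrightarrow> (\<forall>i\<in>{1..d}. n i = t i))
     \<and> ((\<forall>i\<in>{1..d}. n i = t i) \<longrightarrow>
           (\<forall>h\<in>stabilizer d n (Tten d t).
              \<forall>Z\<in>orth_compl d n (lie_alg d n (stabilizer d n (Tten d t))).
                 tconj d n h Z \<in> orth_compl d n (lie_alg d n (stabilizer d n (Tten d t)))))"
proof -
  interpret lex_tensor d n t
    using assms(1,3,4) by unfold_locales auto
  have square: "square_lex_tensor d n t" if "\<forall>i\<in>{1..d}. n i = t i"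
    using assms(1,3,4) that by unfold_locales auto
  show ?thesis
    using n_eq_t_if_reductive square_lex_tensor.reductive_stabilizer_Tten[OF square]
      square_lex_tensor.orth_compl_tconj[OF square] by blast
qed

end
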